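(* Let $(X,Y)$ be a random pair and $(X_i,Y_i)$, $i=1,2,\dots$, independent copies of it. Assume that $\mathbf{E}[X]$, $\mathbf{E}[Y^2]$ and $\mathbf{E}[XY]$ are finite, and that the weight function $w:[0,1]\to\mathbb{R}$ is continuous on $[0,1]$. Then, as $n\to\infty$, $\widehat{\Delta}_n \to \Delta$ almost surely.
   Context: $F_Y$ denotes the cdf of $Y$. The weight function $w:[0,1]\to[-\infty,\infty]$ is finite on $(0,1)$. Standing assumptions: $\mathbf{Var}[Y]\in(0,\infty)$, and $\mathbf{Cov}[Y,w\circ F_Y(Y)]$ is finite and nonzero. The classical beta is $\beta=\mathbf{Cov}[X,Y]/\mathbf{Var}[Y]$. The weighted-Gini beta is $\beta_G=\mathbf{Cov}[X,w\circ F_Y(Y)]/\mathbf{Cov}[Y,w\circ F_Y(Y)]$. Set $\Delta=\beta_G-\beta$. For $n\ge1$, define $\widehat F_Y(y)=\frac{1}{n+1}\sum_{k=1}^n\mathbf{1}\{Y_k\le y\}$ (jumps of size $1/(n+1)$). Let $\overline X=n^{-1}\sum_{k=1}^n X_k$, $\overline Y=n^{-1}\sum_{k=1}^n Y_k$, and $\overline z_0=n^{-1}\sum_{k=1}^n w\circ\widehat F_Y(Y_k)$. Define $\widehat\beta_{G,n}=\frac{\sum_{k=1}^n (X_k-\overline X)(w\circ\widehat F_Y(Y_k)-\overline z_0)}{\sum_{k=1}^n (Y_k-\overline Y)(w\circ\widehat F_Y(Y_k)-\overline z_0)}$, $\widehat\beta_n=\frac{\sum_{k=1}^n (X_k-\overline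 X)(Y_k-\overline Y)}{\sum_{k=1}^n (Y_k-\overline Y)^2}$, and $\widehat\Delta_n=\widehat\beta_{G,n}-\widehat\beta_n$. *)

theory Defs
  imports "HOL-Probability.Probability"
begin

definition covar :: "'a measure \<Rightarrow> ('a \<Rightarrow> real) \<Rightarrow> ('a \<Rightarrow> real) \<Rightarrow> real" where
  "covar M U V = (\<integral>\<omega>. (U \<omega> - (\<integral>x. U x \<partial>M)) * (V \<omega> - (\<integral>x. V x \<partial>M)) \<partial>M)"

definition var :: "'a measure \<Rightarrow> ('a \<Rightarrow> real) \<Rightarrow> real" where
  "var M U = (\<integral>\<omega>. (U \<omega> - (\<integral>x. U x \<partial>M))\<^sup>2 \<partial>M)"

definition cdf_of :: "'a measure \<Rightarrow> ('a \<Rightarrow> real) \<Rightarrow> real \<Rightarrow> real" where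
  "cdf_of M Y = cdf (distr M borel Y)"

definition beta_cl :: "'a measure \<Rightarrow> ('a \<Rightarrow> real) \<Rightarrow> ('a \<Rightarrow> real) \<Rightarrow> real" where
  "beta_cl M X Y = covar M X Y / var M Y"

definition beta_G :: "'a measure \<Rightarrow> (real \<Rightarrow> real) \<Rightarrow> ('a \<Rightarrow> real) \<Rightarrow> ('a \<Rightarrow> real) \<Rightarrow> real" where
  "beta_G M w X Y = covar M X (\<lambda>\<omega>. w (cdf_of M Y (Y \<omega>)))
                    / covar M Y (\<lambda>\<omega>. w (cdf_of M Y (Y \<omega>)))"

definition Delta :: "'a measure \<Rightarrow> (real \<Rightarrow> real) \<Rightarrow> ('a \<Rightarrow> real) \<Rightarrow> ('a \<Rightarrow> real) \<Rightarrow> real" where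
  "Delta M w X Y = beta_G M w X Y - beta_cl M X Y"

definition emp_cdf :: "nat \<Rightarrow> (nat \<Rightarrow> real) \<Rightarrow> real \<Rightarrow> real" where
  "emp_cdf n ys y = (\<Sum>k=1..n. if ys k \<le> y then 1 else 0) / (real n + 1)"

definition mean_n :: "nat \<Rightarrow> (nat \<Rightarrow> real) \<Rightarrow> real" where
  "mean_n n xs = (\<Sum>k=1..n. xs k) / real n"

definition beta_G_hat :: "(real \<Rightarrow> real) \<Rightarrow> nat \<Rightarrow> (nat \<Rightarrow> real) \<Rightarrow> (nat \<Rightarrow> real) \<Rightarrow> real" where
  "beta_G_hat w n xs ys =
     (let z = (\<lambda>k. w (emp_cdf n ys (ys k))); z0 = mean_n n z in
      (\<Sum>k=1..n. (xs k - mean_n n xs) * (z k - z0))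
      / (\<Sum>k=1..n. (ys k - mean_n n ys) * (z k - z0)))"

definition beta_hat :: "nat \<Rightarrow> (nat \<Rightarrow> real) \<Rightarrow> (nat \<Rightarrow> real) \<Rightarrow> real" where
  "beta_hat n xs ys =
     (\<Sum>k=1..n. (xs k - mean_n n xs) * (ys k - mean_n n ys))
     / (\<Sum>k=1..n. (ys k - mean_n n ys)\<^sup>2)"

definition Delta_hat :: "(real \<Rightarrow> real) \<Rightarrow> nat \<Rightarrow> (nat \<Rightarrow> real) \<Rightarrow> (nat \<Rightarrow> real) \<Rightarrow> real" where
  "Delta_hat w n xs ys = beta_G_hat w n xs ys - beta_hat n xs ys"

end

theory Submission
  imports Defs
begin

text \<open>
  Both estimators are ratios of empirical covariances, and an empirical covariance is a
  continuous function of a few sample means. The strong law of large numbers, applied to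
  functions of the i.i.d. pairs (X_k, Y_k), makes these means converge almost surely to the
  corresponding moments, which settles the classical beta. The Gini weights w(F_n(Y_k)) are
  not sample means of an i.i.d. sequence; but by the Glivenko--Cantelli theorem and the uniform
  continuity of w on [0,1] they are uniformly close to w(F(Y_k)), so replacing one by the other
  changes the empirical covariances by o(1) times the sample mean of |X_k| (resp. |Y_k|).

  The strong law itself is proved following Etemadi. For nonnegative variables, truncate Z_i at
  level i: by Borel--Cantelli the truncation is eventually inactive, and since
  sum_i E[Z_i^2; Z_i <= i] / i^2 <= 2 E Z, Chebyshev's inequality and Borel--Cantelli give
  convergence of the truncated averages along the geometric subsequences k_n ~ a^n. Monotonicity
  of the partial sums interpolates between consecutive k_n. Glivenko--Cantelli follows from the
  strong law at finitely many quantiles, again by monotonicity.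
\<close>

section \<open>Cesaro averages and geometric subsequences\<close>

lemma tendsto_mean_n:
  fixes a :: "nat \<Rightarrow> real"
  assumes "a \<longlonglongrightarrow> L"
  shows "(\<lambda>n. mean_n n a) \<longlonglongrightarrow> L"
proof (rule LIMSEQ_I)
  fix r :: real assume r: "r > 0"
  obtain N where N: "\<And>n. n \<ge> N \<Longrightarrow> \<bar>a n - L\<bar> < r/2"
    using LIMSEQ_D[OF assms, of "r/2"] r by auto
  define C where "C = (\<Sum>i=1..N. \<bar>a i - L\<bar>)"
  obtain N2 :: nat where N2: "real N2 > 2 * C / r" using reals_Archimedean2 by blast
  show "\<exists>no. \<forall>n\<ge>no. norm (mean_n n a - L) < r"
  proof (intro exI[of _ "N + N2 + 1"] allI impI)
    fix n assume n: "n \<ge> N + N2 + 1"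
    have npos: "real n > 0" using n by auto
    have split: "{1..n} = {1..N} \<union> {Suc N..n}" using n by auto
    have "mean_n n a - L = (\<Sum>i = 1..n. a i - L) / real n"
      using npos by (simp add: mean_n_def sum_subtractf field_simps)
    also have "(\<Sum>i = 1..n. a i - L) = (\<Sum>i = 1..N. a i - L) + (\<Sum>i = Suc N..n. a i - L)"
      unfolding split by (rule sum.union_disjoint) auto
    finally have eq: "mean_n n a - L = ((\<Sum>i = 1..N. a i - L) + (\<Sum>i = Suc N..n. a i - L)) / real n" .
    have "\<bar>\<Sum>i = 1..N. a i - L\<bar> \<le> C" unfolding C_def by (rule sum_abs)
    moreover have "C < real n * (r/2)"
    proof -
      have "C < real N2 * r / 2" using N2 r by (simp add: field_simps)
      also have "\<dots> \<le> real n * (r/2)" using n r by (auto intro!: mult_right_mono)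
      finally show ?thesis .
    qed
    moreover have "\<bar>\<Sum>i = Suc N..n. a i - L\<bar> \<le> real n * (r / 2)"
    proof -
      have "\<bar>\<Sum>i = Suc N..n. a i - L\<bar> \<le> (\<Sum>i = Suc N..n. r/2)"
        using N by (intro order.trans[OF sum_abs] sum_mono) (auto simp: less_imp_le)
      also have "\<dots> \<le> real n * (r/2)" using r by auto
      finally show ?thesis .
    qed
    ultimately have "\<bar>(\<Sum>i = 1..N. a i - L) + (\<Sum>i = Suc N..n. a i - L)\<bar> < real n * r"
      by linarith
    then show "norm (mean_n n a - L) < r"
      unfolding eq using npos by (simp add: abs_divide pos_divide_less_eq mult.commute)
  qed
qed

text \<open>An integer version of the geometric sequence a^n along which Etemadi's argument
  controls the partial sums.\<close>

fun geom_subseq :: "real \<Rightarrow> nat \<Rightarrow> nat" where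
  "geom_subseq a 0 = 1"
| "geom_subseq a (Suc n) = max (geom_subseq a n + 1) (nat \<lceil>a * real (geom_subseq a n)\<rceil>)"

lemma geom_subseq_ge: "geom_subseq a n \<ge> n + 1"
  by (induction n) auto

lemma strict_mono_geom_subseq: "strict_mono (geom_subseq a)"
  by (rule strict_monoI_Suc) auto

lemma geom_subseq_Suc_ge: "a * real (geom_subseq a n) \<le> real (geom_subseq a (Suc n))"
proof -
  have "a * real (geom_subseq a n) \<le> real (nat \<lceil>a * real (geom_subseq a n)\<rceil>)"
    by linarith
  also have "\<dots> \<le> real (geom_subseq a (Suc n))" by simp
  finally show ?thesis .
qed

lemma geom_subseq_Suc_le:
  assumes "a \<ge> 1"
  shows "real (geom_subseq a (Suc n)) \<le> a * real (geom_subseq a n) + 1"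
proof -
  have "real (geom_subseq a n) \<le> a * real (geom_subseq a n)"
    using assms by (simp add: mult_le_cancel_right1)
  moreover have "0 \<le> a * real (geom_subseq a n)" using assms by simp
  ultimately show ?thesis by (simp add: of_nat_max)
qed

lemma power_mult_geom_subseq_le:
  assumes "a \<ge> 1" "m \<le> n"
  shows "a ^ (n - m) * real (geom_subseq a m) \<le> real (geom_subseq a n)"
  using assms(2)
proof (induction n rule: dec_induct)
  case (step n)
  have "a ^ (Suc n - m) * real (geom_subseq a m) = a * (a ^ (n - m) * real (geom_subseq a m))"
    using step.hyps by (simp add: Suc_diff_le)
  also have "\<dots> \<le> a * real (geom_subseq a n)"
    using step.IH assms(1) by (intro mult_left_mono) auto
  also have "\<dots> \<le> real (geom_subseq a (Suc n))" by (rule geom_subseq_Suc_ge)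
  finally show ?case .
qed simp

lemma sum_inverse_square_geom_subseq_le:
  assumes a: "a > 1" and i: "i \<ge> (1::nat)"
  shows "(\<Sum>n | n < N \<and> geom_subseq a n \<ge> i. 1 / (real (geom_subseq a n))\<^sup>2)
          \<le> a\<^sup>2 / (a\<^sup>2 - 1) / (real i)\<^sup>2"
proof (cases "{n. n < N \<and> geom_subseq a n \<ge> i} = {}")
  case True
  have "1 < a\<^sup>2" using a by (simp add: one_less_power)
  then show ?thesis unfolding True by simp
next
  case False
  define S where "S = {n. n < N \<and> geom_subseq a n \<ge> i}"
  define n0 where "n0 = Min S"
  have finS: "finite S" unfolding S_def by auto
  have n0S: "n0 \<in> S" unfolding n0_def using False finS S_def by (metis Min_in)
  have n0_le: "\<And>n. n \<in> S \<Longrightarrow> n0 \<le> n" unfolding n0_def using finS by auto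
  define b where "b = 1 / a\<^sup>2"
  have b: "0 \<le> b" "b < 1" using a by (auto simp: b_def one_less_power)
  have "(\<Sum>n\<in>S. 1 / (real (geom_subseq a n))\<^sup>2) \<le> (\<Sum>n\<in>S. b ^ (n - n0) / (real i)\<^sup>2)"
  proof (rule sum_mono)
    fix n assume nS: "n \<in> S"
    have "a ^ (n - n0) * real i \<le> a ^ (n - n0) * real (geom_subseq a n0)"
      using n0S a by (auto simp: S_def intro!: mult_left_mono)
    also have "\<dots> \<le> real (geom_subseq a n)"
      using power_mult_geom_subseq_le[of a n0 n] a n0_le[OF nS] by auto
    finally have "1 / (real (geom_subseq a n))\<^sup>2 \<le> 1 / (a ^ (n - n0) * real i)\<^sup>2"
      using a i geom_subseq_ge[where a=a and n=n] by (intro divide_left_mono power_mono) auto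
    also have "\<dots> = b ^ (n - n0) / (real i)\<^sup>2"
      by (simp add: b_def power_mult_distrib power_one_over power_mult[symmetric] mult.commute)
    finally show "1 / (real (geom_subseq a n))\<^sup>2 \<le> b ^ (n - n0) / (real i)\<^sup>2" .
  qed
  also have "\<dots> = (\<Sum>n\<in>S. b ^ (n - n0)) / (real i)\<^sup>2" by (simp add: sum_divide_distrib)
  also have "(\<Sum>n\<in>S. b ^ (n - n0)) \<le> (\<Sum>n\<in>{n0..<N}. b ^ (n - n0))"
    using n0_le b by (intro sum_mono2) (auto simp: S_def)
  also have "\<dots> = (\<Sum>d<N - n0. b ^ d)"
    by (rule sum.reindex_bij_witness[of _ "\<lambda>d. d + n0" "\<lambda>n. n - n0"]) auto
  also have "\<dots> = (1 - b ^ (N - n0)) / (1 - b)"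
    using b by (simp add: sum_gp_strict)
  also have "\<dots> \<le> 1 / (1 - b)" using b by (intro divide_right_mono) auto
  also have "\<dots> = a\<^sup>2 / (a\<^sup>2 - 1)"
    using a by (simp add: b_def field_simps)
  finally show ?thesis
    unfolding S_def using a by (simp add: divide_right_mono)
qed

lemma strict_mono_bracket:
  fixes k :: "nat \<Rightarrow> nat"
  assumes "strict_mono k" "k N \<le> m"
  obtains n where "n \<ge> N" "k n \<le> m" "m < k (Suc n)"
proof -
  have "m < k (Suc m)" using seq_suble[OF assms(1), of "Suc m"] by simp
  then have "\<exists>p. m < k p" by blast
  then obtain p where p: "m < k p" "\<forall>q<p. \<not> m < k q"
    using exists_least_iff[of "\<lambda>p. m < k p"] by blast
  have "N < p"
  proof (rule ccontr)
    assume "\<not> N < p"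
    then have "k p \<le> k N" using assms(1) by (simp add: strict_mono_less_eq)
    then show False using p(1) assms(2) by simp
  qed
  then show ?thesis using p by (intro that[of "p - 1"]) (auto simp: not_less)
qed

lemma ratio_bounds_between_subseq:
  fixes s :: "nat \<Rightarrow> real" and k :: "nat \<Rightarrow> nat"
  assumes mono: "mono s" and nonneg: "\<And>n. s n \<ge> 0"
    and k: "strict_mono k" "\<And>n. k n > 0" and c: "c > 0"
    and growth: "\<And>n. n \<ge> N \<Longrightarrow> real (k (Suc n)) \<le> c * real (k n)"
    and close: "\<And>n. n \<ge> N \<Longrightarrow> \<bar>s (k n) / real (k n) - \<mu>\<bar> < \<delta>"
    and m: "m \<ge> k N"
  shows "(\<mu> - \<delta>) / c \<le> s m / real m" "s m / real m \<le> (\<mu> + \<delta>) * c"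
proof -
  obtain n where n: "n \<ge> N" "k n \<le> m" "m < k (Suc n)"
    using strict_mono_bracket[OF k(1) m] .
  have kn: "real (k n) > 0" "real (k (Suc n)) > 0" using k(2) by auto
  have mpos: "real m > 0" using n(2) k(2)[of n] by simp
  have close_n: "\<mu> - \<delta> \<le> s (k n) / real (k n)"
    and close_Sn: "s (k (Suc n)) / real (k (Suc n)) \<le> \<mu> + \<delta>"
    using close[of n] close[of "Suc n"] n(1) by auto
  have "0 \<le> s (k (Suc n)) / real (k (Suc n))" using nonneg by simp
  then have "0 \<le> \<mu> + \<delta>" using close_Sn by linarith
  have m_le: "real m \<le> c * real (k n)" using growth[OF n(1)] n(3) by linarith
  have "s m \<le> s (k (Suc n))" using n(3) mono by (simp add: monoD)
  also have "\<dots> \<le> (\<mu> + \<delta>) * real (k (Suc n))" using close_Sn kn by (simp add: field_simps)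
  also have "\<dots> \<le> (\<mu> + \<delta>) * (c * real m)"
  proof (rule mult_left_mono[OF _ \<open>0 \<le> \<mu> + \<delta>\<close>])
    have "c * real (k n) \<le> c * real m" using n(2) c by simp
    then show "real (k (Suc n)) \<le> c * real m" using growth[OF n(1)] by linarith
  qed
  finally show "s m / real m \<le> (\<mu> + \<delta>) * c" using mpos by (simp add: field_simps)
  show "(\<mu> - \<delta>) / c \<le> s m / real m"
  proof (cases "\<mu> - \<delta> \<ge> 0")
    case True
    have "(\<mu> - \<delta>) * real m \<le> (\<mu> - \<delta>) * (c * real (k n))"
      using m_le True by (rule mult_left_mono)
    also have "\<dots> \<le> c * s (k n)"
    proof -
      have "(\<mu> - \<delta>) * real (k n) \<le> s (k n)" using close_n kn by (simp add: field_simps)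
      from mult_left_mono[OF this, of c] c show ?thesis by (simp add: ac_simps)
    qed
    also have "\<dots> \<le> c * s m" using n(2) mono c by (simp add: monoD)
    finally show ?thesis using mpos c by (simp add: field_simps)
  next
    case False
    then have "(\<mu> - \<delta>) / c < 0" using c by (simp add: divide_neg_pos)
    moreover have "0 \<le> s m / real m" using nonneg by simp
    ultimately show ?thesis by linarith
  qed
qed

lemma tendsto_ratio_from_geom_subseqs:
  fixes s :: "nat \<Rightarrow> real"
  assumes mono: "mono s" and nonneg: "\<And>n. s n \<ge> 0"
    and lim: "\<And>j. (\<lambda>n. s (geom_subseq (1 + 1 / (real j + 1)) n)
                        / real (geom_subseq (1 + 1 / (real j + 1)) n)) \<longlonglongrightarrow> \<mu>"
  shows "(\<lambda>m. s m / real m) \<longlonglongrightarrow> \<mu>"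
proof (rule LIMSEQ_I)
  fix \<epsilon> :: real assume eps: "\<epsilon> > 0"
  define d where "d j = 1 / (real j + 1)" for j :: nat
  have d0: "d \<longlonglongrightarrow> 0"
    unfolding d_def using LIMSEQ_inverse_real_of_nat by (simp add: inverse_eq_divide add.commute)
  have "(\<lambda>j. (\<mu> + d j) * (1 + 2 * d j)) \<longlonglongrightarrow> (\<mu> + 0) * (1 + 2 * 0)"
    "(\<lambda>j. (\<mu> - d j) / (1 + 2 * d j)) \<longlonglongrightarrow> (\<mu> - 0) / (1 + 2 * 0)"
    by (intro tendsto_intros d0; simp)+
  then have "eventually (\<lambda>j. (\<mu> + d j) * (1 + 2 * d j) < \<mu> + \<epsilon>
      \<and> \<mu> - \<epsilon> < (\<mu> - d j) / (1 + 2 * d j)) sequentially"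
    using eps by (intro eventually_conj order_tendstoD) auto
  then obtain j where upper: "(\<mu> + d j) * (1 + 2 * d j) < \<mu> + \<epsilon>"
      and lower: "\<mu> - \<epsilon> < (\<mu> - d j) / (1 + 2 * d j)"
    unfolding eventually_sequentially by blast
  define k where "k = geom_subseq (1 + d j)"
  have dpos: "d j > 0" unfolding d_def by simp
  obtain N1 where N1: "\<And>n. n \<ge> N1 \<Longrightarrow> \<bar>s (k n) / real (k n) - \<mu>\<bar> < d j"
    using LIMSEQ_D[OF lim[of j] dpos] unfolding k_def d_def by auto
  have growth: "real (k (Suc n)) \<le> (1 + 2 * d j) * real (k n)" if "n \<ge> max N1 j" for n
  proof -
    have "real j + 1 \<le> real (k n)"
      using that geom_subseq_ge[where a="1 + d j" and n=n] by (simp add: k_def)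
    then have "1 \<le> d j * real (k n)" by (simp add: d_def field_simps)
    then show ?thesis
      using geom_subseq_Suc_le[of "1 + d j" n] dpos by (simp add: k_def algebra_simps)
  qed
  have bounds: "(\<mu> - d j) / (1 + 2 * d j) \<le> s m / real m \<and> s m / real m \<le> (\<mu> + d j) * (1 + 2 * d j)"
    if "m \<ge> k (max N1 j)" for m
  proof -
    have "strict_mono k" unfolding k_def by (rule strict_mono_geom_subseq)
    moreover have "0 < k n" for n unfolding k_def using geom_subseq_ge[where a="1 + d j" and n=n] by simp
    ultimately show ?thesis
      using ratio_bounds_between_subseq[OF mono nonneg, of k "1 + 2 * d j" "max N1 j" \<mu> "d j" m]
        dpos growth N1 that by auto
  qed
  show "\<exists>no. \<forall>m\<ge>no. norm (s m / real m - \<mu>) < \<epsilon>"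
  proof (intro exI[of _ "k (max N1 j)"] allI impI)
    fix m assume "k (max N1 j) \<le> m"
    with bounds[of m] upper lower show "norm (s m / real m - \<mu>) < \<epsilon>" by (simp add: abs_less_iff)
  qed
qed

section \<open>Etemadi's strong law of large numbers\<close>

lemma sum_inverse_square_le:
  assumes "m \<ge> 1"
  shows "(\<Sum>i=m..K. 1 / (real i)\<^sup>2) \<le> 2 / real m"
proof (cases "m \<le> Suc K")
  case True
  have "(\<Sum>i=m..K. 1 / (real i)\<^sup>2) \<le> (\<Sum>i=m..K. (- 2 / real (Suc i)) - (- 2 / real i))"
  proof (rule sum_mono)
    fix i assume "i \<in> {m..K}"
    then have i: "real i \<ge> 1" using assms by simp
    then have "real i * (real i + 1) \<le> 2 * (real i * real i)"
      using mult_left_mono[OF i, of "real i"] by (simp add: algebra_simps)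
    then have "1 / (real i)\<^sup>2 \<le> 2 / (real i * (real i + 1))"
      using i by (simp add: divide_simps power2_eq_square)
    also have "\<dots> = (- 2 / real (Suc i)) - (- 2 / real i)"
      using i by (simp add: field_simps)
    finally show "1 / (real i)\<^sup>2 \<le> (- 2 / real (Suc i)) - (- 2 / real i)" .
  qed
  also have "\<dots> = 2 / real m - 2 / real (Suc K)"
    using sum_Suc_diff[OF True, of "\<lambda>i. - 2 / real i"] by simp
  also have "\<dots> \<le> 2 / real m" by simp
  finally show ?thesis .
qed simp

lemma sum_square_div_square_tail_le:
  fixes z :: real
  assumes z: "z \<ge> 0"
  shows "(\<Sum>i=1..K. if z \<le> real i then z\<^sup>2 / (real i)\<^sup>2 else 0) \<le> 2 * z"
proof -
  define m where "m = max 1 (nat \<lceil>z\<rceil>)"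
  have m: "m \<ge> 1" "z \<le> real m" unfolding m_def by (auto simp: of_nat_max) linarith
  have "{i \<in> {1..K}. z \<le> real i} = {m..K}"
    unfolding m_def by (auto simp: nat_le_iff ceiling_le_iff)
  then have "(\<Sum>i=1..K. if z \<le> real i then z\<^sup>2 / (real i)\<^sup>2 else 0) = (\<Sum>i=m..K. z\<^sup>2 / (real i)\<^sup>2)"
    by (simp flip: sum.inter_filter)
  also have "\<dots> = z\<^sup>2 * (\<Sum>i=m..K. 1 / (real i)\<^sup>2)"
    by (simp add: sum_distrib_left)
  also have "\<dots> \<le> z\<^sup>2 * (2 / real m)"
    using sum_inverse_square_le[OF m(1)] by (rule mult_left_mono) simp
  also have "\<dots> \<le> 2 * z"
    using m z by (simp add: field_simps power2_eq_square mult_left_mono)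
  finally show ?thesis .
qed

lemma sum_count_less_le:
  fixes z :: real
  assumes "z \<ge> 0"
  shows "(\<Sum>i=1..K. if real i < z then 1 else 0) \<le> z"
proof -
  have "(\<Sum>i=1..K. if real i < z then 1 else 0) \<le> min (real K) z"
    by (induction K) (use assms in \<open>auto simp: min_def split: if_split_asm\<close>)
  then show ?thesis by linarith
qed

lemma summable_sum_div_square_geom_subseq:
  fixes q :: "nat \<Rightarrow> real"
  assumes a: "a > 1" and q: "\<And>i. q i \<ge> 0" and bound: "\<And>K. (\<Sum>i=1..K. q i / (real i)\<^sup>2) \<le> C"
  shows "summable (\<lambda>n. (\<Sum>i=1..geom_subseq a n. q i) / (real (geom_subseq a n))\<^sup>2)"
proof (rule summableI_nonneg_bounded)
  define k where "k = geom_subseq a"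
  define c where "c = a\<^sup>2 / (a\<^sup>2 - 1)"
  have "c \<ge> 0" using a by (simp add: c_def one_less_power less_imp_le)
  show "0 \<le> (\<Sum>i=1..geom_subseq a n. q i) / (real (geom_subseq a n))\<^sup>2" for n
    using q by (auto intro!: divide_nonneg_nonneg sum_nonneg)
  fix N :: nat
  define K where "K = k N"
  have "(\<Sum>n<N. (\<Sum>i=1..k n. q i) / (real (k n))\<^sup>2)
      = (\<Sum>n<N. \<Sum>i=1..K. if i \<le> k n then q i / (real (k n))\<^sup>2 else 0)"
  proof (rule sum.cong[OF refl])
    fix n assume "n \<in> {..<N}"
    then have "k n \<le> K" using strict_mono_geom_subseq unfolding K_def k_def
      by (simp add: strict_mono_less_eq)
    then have "{i\<in>{1..K}. i \<le> k n} = {1..k n}" by auto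
    then show "(\<Sum>i=1..k n. q i) / (real (k n))\<^sup>2
        = (\<Sum>i=1..K. if i \<le> k n then q i / (real (k n))\<^sup>2 else 0)"
      by (simp add: sum_divide_distrib flip: sum.inter_filter)
  qed
  also have "\<dots> = (\<Sum>i=1..K. q i * (\<Sum>n | n < N \<and> k n \<ge> i. 1 / (real (k n))\<^sup>2))"
    by (subst sum.swap) (simp add: sum_distrib_left sum.inter_filter[symmetric] conj_commute)
  also have "\<dots> \<le> (\<Sum>i=1..K. q i * (c / (real i)\<^sup>2))"
    using sum_inverse_square_geom_subseq_le[OF a] q
    by (intro sum_mono mult_left_mono) (auto simp: k_def c_def)
  also have "\<dots> = c * (\<Sum>i=1..K. q i / (real i)\<^sup>2)"
    by (simp add: sum_distrib_left mult.commute)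
  also have "\<dots> \<le> c * C" using bound \<open>c \<ge> 0\<close> by (rule mult_left_mono)
  finally show "(\<Sum>n<N. (\<Sum>i=1..geom_subseq a n. q i) / (real (geom_subseq a n))\<^sup>2) \<le> c * C"
    unfolding k_def .
qed

lemma LIMSEQ_zero_if_eventually_less_inverse:
  fixes x :: "nat \<Rightarrow> real"
  assumes "\<And>l::nat. eventually (\<lambda>n. \<bar>x n\<bar> < 1 / (real l + 1)) sequentially"
  shows "x \<longlonglongrightarrow> 0"
proof (rule LIMSEQ_I)
  fix r :: real assume "r > 0"
  then obtain l :: nat where l: "l > 0" "inverse (real l) < r"
    using ex_inverse_of_nat_less by blast
  have "1 / (real l + 1) \<le> inverse (real l)"
    using l by (simp add: inverse_eq_divide frac_le)
  with l have "1 / (real l + 1) < r" by linarith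
  then show "\<exists>N. \<forall>n\<ge>N. norm (x n - 0) < r"
    using assms[of l] unfolding eventually_sequentially by force
qed

definition trunc :: "nat \<Rightarrow> real \<Rightarrow> real" where
  "trunc i z = (if z \<le> real i then z else 0)"

lemma trunc_borel[measurable]: "trunc i \<in> borel_measurable borel"
  unfolding trunc_def by measurable

lemma abs_trunc_le: "\<bar>trunc i z\<bar> \<le> \<bar>z\<bar>"
  by (simp add: trunc_def)

lemma eventually_trunc_eq: "eventually (\<lambda>i. trunc i z = z) sequentially"
proof -
  have "trunc i z = z" if "i \<ge> nat \<lceil>z\<rceil>" for i
  proof -
    have "z \<le> real (nat \<lceil>z\<rceil>)" by linarith
    also have "\<dots> \<le> real i" using that by simp
    finally show ?thesis by (simp add: trunc_def)
  qed
  then show ?thesis unfolding eventually_sequentially by blast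
qed

lemma abs_trunc_le_index: "z \<ge> 0 \<Longrightarrow> \<bar>trunc i z\<bar> \<le> real i"
  by (simp add: trunc_def)

context prob_space
begin

lemma distr_comp_eq_if_distr_eq:
  fixes U V :: "'a \<Rightarrow> 'b::topological_space" and g :: "'b \<Rightarrow> 'c::topological_space"
  assumes "distr M borel U = distr M borel V"
    and [measurable]: "U \<in> borel_measurable M" "V \<in> borel_measurable M" "g \<in> borel_measurable borel"
  shows "distr M borel (\<lambda>\<omega>. g (U \<omega>)) = distr M borel (\<lambda>\<omega>. g (V \<omega>))"
proof -
  have "distr M borel (\<lambda>\<omega>. g (U \<omega>)) = distr (distr M borel U) borel g"
    by (subst distr_distr) (auto simp: comp_def)
  also have "\<dots> = distr (distr M borel V) borel g" using assms(1) by simp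
  also have "\<dots> = distr M borel (\<lambda>\<omega>. g (V \<omega>))"
    by (subst distr_distr) (auto simp: comp_def)
  finally show ?thesis .
qed

lemma expectation_eq_if_distr_eq:
  fixes U V :: "'a \<Rightarrow> 'b::topological_space" and f :: "'b \<Rightarrow> real"
  assumes "distr M borel U = distr M borel V"
    and [measurable]: "U \<in> borel_measurable M" "V \<in> borel_measurable M" "f \<in> borel_measurable borel"
  shows "expectation (\<lambda>\<omega>. f (U \<omega>)) = expectation (\<lambda>\<omega>. f (V \<omega>))"
  using integral_distr[of U M borel f] integral_distr[of V M borel f] assms(1) by simp

lemma prob_eq_if_distr_eq:
  fixes U V :: "'a \<Rightarrow> 'b::topological_space"
  assumes "distr M borel U = distr M borel V"
    and [measurable]: "U \<in> borel_measurable M" "V \<in> borel_measurable M" "S \<in> sets borel"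
  shows "prob {\<omega>\<in>space M. U \<omega> \<in> S} = prob {\<omega>\<in>space M. V \<omega> \<in> S}"
  using measure_distr[of U M borel S] measure_distr[of V M borel S] assms(1)
  by (simp add: vimage_def Int_def conj_commute)

lemma expectation_trunc_tendsto:
  assumes [measurable]: "Z \<in> borel_measurable M" and "integrable M Z"
  shows "(\<lambda>i. expectation (\<lambda>\<omega>. trunc i (Z \<omega>))) \<longlonglongrightarrow> expectation Z"
proof (rule integral_dominated_convergence[where w="\<lambda>\<omega>. \<bar>Z \<omega>\<bar>"])
  show "AE \<omega> in M. (\<lambda>i. trunc i (Z \<omega>)) \<longlonglongrightarrow> Z \<omega>"
    by (intro AE_I2 tendsto_eventually eventually_trunc_eq)
qed (use assms abs_trunc_le in auto)

lemma sum_expectation_trunc_square_le: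
  assumes [measurable]: "Z \<in> borel_measurable M" and "integrable M Z"
    and nonneg: "\<And>\<omega>. \<omega> \<in> space M \<Longrightarrow> Z \<omega> \<ge> 0"
  shows "(\<Sum>i=1..K. expectation (\<lambda>\<omega>. (trunc i (Z \<omega>))\<^sup>2) / (real i)\<^sup>2) \<le> 2 * expectation Z"
proof -
  have int: "integrable M (\<lambda>\<omega>. (trunc i (Z \<omega>))\<^sup>2 / (real i)\<^sup>2)" for i
  proof (rule integrable_const_bound[where B=1])
    have "(trunc i (Z \<omega>))\<^sup>2 \<le> (real i)\<^sup>2" if "\<omega> \<in> space M" for \<omega>
      using abs_trunc_le_index[OF nonneg[OF that], of i] by (simp flip: abs_le_square_iff)
    then show "AE \<omega> in M. norm ((trunc i (Z \<omega>))\<^sup>2 / (real i)\<^sup>2) \<le> 1"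
      by (intro AE_I2) (auto simp: divide_le_eq_1)
  qed simp
  have "(\<Sum>i=1..K. expectation (\<lambda>\<omega>. (trunc i (Z \<omega>))\<^sup>2) / (real i)\<^sup>2)
      = expectation (\<lambda>\<omega>. \<Sum>i=1..K. (trunc i (Z \<omega>))\<^sup>2 / (real i)\<^sup>2)"
    using int by (simp add: Bochner_Integration.integral_sum)
  also have "\<dots> \<le> expectation (\<lambda>\<omega>. 2 * Z \<omega>)"
  proof (rule integral_mono)
    fix \<omega> assume "\<omega> \<in> space M"
    then have "(\<Sum>i=1..K. (trunc i (Z \<omega>))\<^sup>2 / (real i)\<^sup>2)
        = (\<Sum>i=1..K. if Z \<omega> \<le> real i then (Z \<omega>)\<^sup>2 / (real i)\<^sup>2 else 0)"
      by (intro sum.cong) (auto simp: trunc_def)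
    also have "\<dots> \<le> 2 * Z \<omega>" using nonneg \<open>\<omega> \<in> space M\<close> by (intro sum_square_div_square_tail_le)
    finally show "(\<Sum>i=1..K. (trunc i (Z \<omega>))\<^sup>2 / (real i)\<^sup>2) \<le> 2 * Z \<omega>" .
  qed (use int assms in auto)
  finally show ?thesis by simp
qed

lemma expectation_square_sum_indep:
  fixes V :: "'i \<Rightarrow> 'a \<Rightarrow> real"
  assumes indep: "indep_vars (\<lambda>_. borel) V I" and J: "finite J" "J \<subseteq> I"
    and square_int: "\<And>i. i \<in> J \<Longrightarrow> integrable M (\<lambda>\<omega>. (V i \<omega>)\<^sup>2)"
    and centered: "\<And>i. i \<in> J \<Longrightarrow> expectation (V i) = 0"
  shows "integrable M (\<lambda>\<omega>. (\<Sum>i\<in>J. V i \<omega>)\<^sup>2)"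
    and "expectation (\<lambda>\<omega>. (\<Sum>i\<in>J. V i \<omega>)\<^sup>2) = (\<Sum>i\<in>J. expectation (\<lambda>\<omega>. (V i \<omega>)\<^sup>2))"
proof -
  have meas: "V i \<in> borel_measurable M" if "i \<in> J" for i
    using indep J that unfolding indep_vars_def by auto
  have int: "integrable M (V i)" if "i \<in> J" for i
    using square_integrable_imp_integrable[OF meas[OF that] square_int[OF that]] .
  have indep2: "indep_vars (\<lambda>_. borel) V {i, j}" if "i \<in> J" "j \<in> J" for i j
    using J that by (intro indep_vars_subset[OF indep]) auto
  have prod: "(\<Prod>l\<in>{i, j}. V l \<omega>) = V i \<omega> * V j \<omega>" if "i \<noteq> j" for i j \<omega>
    using that by simp
  have int2: "integrable M (\<lambda>\<omega>. V i \<omega> * V j \<omega>)" and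
    E2: "expectation (\<lambda>\<omega>. V i \<omega> * V j \<omega>) = (if i = j then expectation (\<lambda>\<omega>. (V i \<omega>)\<^sup>2) else 0)"
    if "i \<in> J" "j \<in> J" for i j
  proof (atomize (full), cases "i = j")
    case False
    have ij: "\<And>l. l \<in> {i, j} \<Longrightarrow> integrable M (V l)" using int that by auto
    show "integrable M (\<lambda>\<omega>. V i \<omega> * V j \<omega>) \<and>
        expectation (\<lambda>\<omega>. V i \<omega> * V j \<omega>) = (if i = j then expectation (\<lambda>\<omega>. (V i \<omega>)\<^sup>2) else 0)"
      using indep_vars_integrable[OF _ indep2[OF that] ij] indep_vars_lebesgue_integral[OF _ indep2[OF that] ij]
        centered that False by (simp add: prod)
  qed (use square_int that in \<open>simp add: power2_eq_square\<close>)
  have square: "(\<lambda>\<omega>. (\<Sum>i\<in>J. V i \<omega>)\<^sup>2) = (\<lambda>\<omega>. \<Sum>i\<in>J. \<Sum>j\<in>J. V i \<omega> * V j \<omega>)"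
    by (simp add: power2_eq_square sum_product)
  then show "integrable M (\<lambda>\<omega>. (\<Sum>i\<in>J. V i \<omega>)\<^sup>2)"
    using int2 by (simp add: integrable_sum)
  from square have "expectation (\<lambda>\<omega>. (\<Sum>i\<in>J. V i \<omega>)\<^sup>2) = (\<Sum>i\<in>J. \<Sum>j\<in>J. expectation (\<lambda>\<omega>. V i \<omega> * V j \<omega>))"
    using int2 by (simp add: Bochner_Integration.integral_sum integrable_sum)
  also have "\<dots> = (\<Sum>i\<in>J. expectation (\<lambda>\<omega>. (V i \<omega>)\<^sup>2))"
    using J(1) by (simp add: E2 cong: sum.cong)
  finally show "expectation (\<lambda>\<omega>. (\<Sum>i\<in>J. V i \<omega>)\<^sup>2) = (\<Sum>i\<in>J. expectation (\<lambda>\<omega>. (V i \<omega>)\<^sup>2))" .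
qed

lemma AE_tendsto_zero_along_geom_subseq:
  fixes U :: "nat \<Rightarrow> 'a \<Rightarrow> real" and q :: "nat \<Rightarrow> real"
  assumes a: "a > 1"
    and U[measurable]: "\<And>N. U N \<in> borel_measurable M" and U2: "\<And>N. integrable M (\<lambda>\<omega>. (U N \<omega>)\<^sup>2)"
    and second_moment: "\<And>N. expectation (\<lambda>\<omega>. (U N \<omega>)\<^sup>2) \<le> (\<Sum>i=1..N. q i)"
    and q: "\<And>i. q i \<ge> 0" and bound: "\<And>K. (\<Sum>i=1..K. q i / (real i)\<^sup>2) \<le> C"
  shows "AE \<omega> in M. (\<lambda>n. U (geom_subseq a n) \<omega> / real (geom_subseq a n)) \<longlonglongrightarrow> 0"
proof -
  define k where "k = geom_subseq a"
  have k_pos: "real (k n) > 0" for n using geom_subseq_ge[where a=a and n=n] by (simp add: k_def)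
  have summable: "summable (\<lambda>n. (\<Sum>i=1..k n. q i) / (real (k n))\<^sup>2)"
    unfolding k_def by (rule summable_sum_div_square_geom_subseq[OF a q bound])
  have "AE \<omega> in M. eventually (\<lambda>n. \<bar>U (k n) \<omega> / real (k n)\<bar> < 1 / (real l + 1)) sequentially"
    for l :: nat
  proof -
    define A where "A n = {\<omega>\<in>space M. real (k n) / (real l + 1) \<le> \<bar>U (k n) \<omega>\<bar>}" for n
    have [measurable]: "A n \<in> sets M" for n unfolding A_def by measurable
    have "summable (\<lambda>n. measure M (A n))"
    proof (rule summable_comparison_test')
      show "summable (\<lambda>n. (real l + 1)\<^sup>2 * ((\<Sum>i=1..k n. q i) / (real (k n))\<^sup>2))"
        using summable by (rule summable_mult)
      fix n
      have "measure M (A n) \<le> expectation (\<lambda>\<omega>. (U (k n) \<omega>)\<^sup>2) / (real (k n) / (real l + 1))\<^sup>2"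
        unfolding A_def using k_pos[of n] by (intro second_moment_method U2) auto
      also have "\<dots> \<le> (real l + 1)\<^sup>2 * ((\<Sum>i=1..k n. q i) / (real (k n))\<^sup>2)"
        using second_moment[of "k n"] by (simp add: power_divide divide_right_mono)
      finally show "norm (measure M (A n)) \<le> (real l + 1)\<^sup>2 * ((\<Sum>i=1..k n. q i) / (real (k n))\<^sup>2)"
        by simp
    qed
    then have "AE \<omega> in M. eventually (\<lambda>n. \<omega> \<in> space M - A n) sequentially"
      by (intro borel_cantelli_AE1) (auto simp: less_top[symmetric])
    then show ?thesis
      by eventually_elim
        (auto elim!: eventually_mono simp: A_def abs_divide divide_less_eq k_pos)
  qed
  then have "AE \<omega> in M. \<forall>l::nat. eventually (\<lambda>n. \<bar>U (k n) \<omega> / real (k n)\<bar> < 1 / (real l + 1)) sequentially"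
    by (simp add: AE_all_countable)
  then show ?thesis
    unfolding k_def by eventually_elim (rule LIMSEQ_zero_if_eventually_less_inverse, blast)
qed

lemma AE_eventually_le_index:
  fixes Z :: "'a \<Rightarrow> real" and Zs :: "nat \<Rightarrow> 'a \<Rightarrow> real"
  assumes dist: "\<And>i. i \<ge> 1 \<Longrightarrow> distr M borel (Zs i) = distr M borel Z"
    and Zs: "\<And>i. i \<ge> 1 \<Longrightarrow> Zs i \<in> borel_measurable M" and [measurable]: "Z \<in> borel_measurable M"
    and "integrable M Z" and nonneg: "\<And>\<omega>. \<omega> \<in> space M \<Longrightarrow> Z \<omega> \<ge> 0"
  shows "AE \<omega> in M. eventually (\<lambda>i. Zs i \<omega> \<le> real i) sequentially"
proof -
  define B where "B i = {\<omega>\<in>space M. real (Suc i) < Zs (Suc i) \<omega>}" for i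
  have [measurable]: "B i \<in> sets M" for i
    using Zs[of "Suc i"] unfolding B_def by measurable
  have indicator_int: "integrable M (\<lambda>\<omega>. if r < Z \<omega> then 1 else (0::real))" for r
    by (rule integrable_const_bound[where B=1]) auto
  have prob_B: "measure M (B i) = expectation (\<lambda>\<omega>. if real (Suc i) < Z \<omega> then 1 else 0)" for i
  proof -
    have "measure M (B i) = prob {\<omega>\<in>space M. Z \<omega> \<in> {real (Suc i)<..}}"
      unfolding B_def using prob_eq_if_distr_eq[OF dist Zs, of "Suc i" "{real (Suc i)<..}"] by simp
    also have "\<dots> = expectation (indicator {\<omega>\<in>space M. real (Suc i) < Z \<omega>})"
      by simp
    also have "\<dots> = expectation (\<lambda>\<omega>. if real (Suc i) < Z \<omega> then 1 else 0)"
      by (rule Bochner_Integration.integral_cong) (auto simp: indicator_def)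
    finally show ?thesis .
  qed
  have "summable (\<lambda>i. measure M (B i))"
  proof (rule summableI_nonneg_bounded)
    fix K :: nat
    have "(\<Sum>i<K. measure M (B i)) = expectation (\<lambda>\<omega>. \<Sum>i=1..K. if real i < Z \<omega> then 1 else 0)"
      using indicator_int
      by (simp add: prob_B Bochner_Integration.integral_sum sum.atLeast1_atMost_eq)
    also have "\<dots> \<le> expectation Z"
      using indicator_int assms(4) nonneg sum_count_less_le by (intro integral_mono) auto
    finally show "(\<Sum>i<K. measure M (B i)) \<le> expectation Z" .
  qed simp
  then have "AE \<omega> in M. eventually (\<lambda>i. \<omega> \<in> space M - B i) sequentially"
    by (intro borel_cantelli_AE1) (auto simp: less_top[symmetric])
  then show ?thesis
  proof eventually_elim
    case (elim \<omega>)
    then have "eventually (\<lambda>i. Zs (Suc i) \<omega> \<le> real (Suc i)) sequentially"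
      by (auto elim!: eventually_mono simp: B_def not_less)
    then show ?case using eventually_sequentially_Suc[of "\<lambda>i. Zs i \<omega> \<le> real i"] by blast
  qed
qed

end

lemma tendsto_mean_n_truncated:
  fixes z t m :: "nat \<Rightarrow> real"
  assumes nonneg: "\<And>i. z i \<ge> 0" and eq: "eventually (\<lambda>i. z i = t i) sequentially"
    and mean_m: "(\<lambda>n. mean_n n m) \<longlonglongrightarrow> \<mu>"
    and fluct: "\<And>j. (\<lambda>n. (\<Sum>i=1..geom_subseq (1 + 1 / (real j + 1)) n. t i - m i)
                          / real (geom_subseq (1 + 1 / (real j + 1)) n)) \<longlonglongrightarrow> 0"
  shows "(\<lambda>n. mean_n n z) \<longlonglongrightarrow> \<mu>"
proof -
  define s where "s N = (\<Sum>i=1..N. z i)" for N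
  define D where "D N = (\<Sum>i=1..N. z i - t i)" for N
  obtain I where I: "\<And>i. i \<ge> I \<Longrightarrow> z i = t i" using eq unfolding eventually_sequentially by blast
  have D_const: "D N = D I" if "N \<ge> I" for N
    using that by (induction N rule: dec_induct) (auto simp: D_def I)
  have decomp: "s N / real N = mean_n N m + (\<Sum>i=1..N. t i - m i) / real N + D N / real N" for N
  proof -
    have "s N = (\<Sum>i=1..N. m i) + (\<Sum>i=1..N. t i - m i) + D N"
      by (simp add: s_def D_def sum_subtractf)
    then show ?thesis by (simp add: mean_n_def add_divide_distrib)
  qed
  have "(\<lambda>N. s N / real N) \<longlonglongrightarrow> \<mu>"
  proof (rule tendsto_ratio_from_geom_subseqs)
    show "mono s" unfolding s_def mono_def using nonneg by (intro allI impI sum_mono2) auto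
    show "0 \<le> s n" for n unfolding s_def using nonneg by (simp add: sum_nonneg)
    fix j
    define k where "k = geom_subseq (1 + 1 / (real j + 1))"
    have k: "strict_mono k" unfolding k_def by (rule strict_mono_geom_subseq)
    have "(\<lambda>n. D I / real (k n)) \<longlonglongrightarrow> 0"
      using LIMSEQ_subseq_LIMSEQ[OF lim_const_over_n[of "D I"] k] by (simp add: comp_def)
    moreover have "eventually (\<lambda>n. D I / real (k n) = D (k n) / real (k n)) sequentially"
    proof -
      have "eventually (\<lambda>n. k n \<ge> I) sequentially"
        using filterlim_subseq[OF k] unfolding filterlim_at_top by blast
      then show ?thesis by eventually_elim (use D_const in metis)
    qed
    ultimately have "(\<lambda>n. D (k n) / real (k n)) \<longlonglongrightarrow> 0" by (rule Lim_transform_eventually)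
    then have "(\<lambda>n. mean_n (k n) m + (\<Sum>i=1..k n. t i - m i) / real (k n) + D (k n) / real (k n))
        \<longlonglongrightarrow> \<mu> + 0 + 0"
      using LIMSEQ_subseq_LIMSEQ[OF mean_m k] fluct[of j] unfolding k_def
      by (intro tendsto_add) (auto simp: comp_def)
    then show "(\<lambda>n. s (k n) / real (k n)) \<longlonglongrightarrow> \<mu>" by (simp add: decomp)
  qed
  then show ?thesis by (simp add: s_def mean_n_def)
qed

context prob_space
begin

lemma second_moment_truncated_sum:
  fixes Z :: "'a \<Rightarrow> real" and Zs :: "nat \<Rightarrow> 'a \<Rightarrow> real"
  assumes indep: "indep_vars (\<lambda>_. borel) Zs {1..}"
    and dist: "\<And>i. i \<ge> 1 \<Longrightarrow> distr M borel (Zs i) = distr M borel Z"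
    and [measurable]: "Z \<in> borel_measurable M" and nonneg: "\<And>i \<omega>. Zs i \<omega> \<ge> 0"
  defines "U \<equiv> \<lambda>N \<omega>. \<Sum>i=1..N. trunc i (Zs i \<omega>) - expectation (\<lambda>\<omega>. trunc i (Z \<omega>))"
  shows "integrable M (\<lambda>\<omega>. (U N \<omega>)\<^sup>2)"
    and "expectation (\<lambda>\<omega>. (U N \<omega>)\<^sup>2) \<le> (\<Sum>i=1..N. expectation (\<lambda>\<omega>. (trunc i (Z \<omega>))\<^sup>2))"
proof -
  have Zs[measurable]: "Zs i \<in> borel_measurable M" if "i \<ge> 1" for i
    using indep that unfolding indep_vars_def by auto
  define m where "m i = expectation (\<lambda>\<omega>. trunc i (Z \<omega>))" for i
  define q where "q i = expectation (\<lambda>\<omega>. (trunc i (Z \<omega>))\<^sup>2)" for i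
  define V where "V i \<omega> = trunc i (Zs i \<omega>) - m i" for i \<omega>
  have T_int: "integrable M (\<lambda>\<omega>. trunc i (Zs i \<omega>))" "integrable M (\<lambda>\<omega>. (trunc i (Zs i \<omega>))\<^sup>2)"
    if "i \<ge> 1" for i
  proof -
    have "\<bar>trunc i (Zs i \<omega>)\<bar> \<le> real i" for \<omega> using abs_trunc_le_index[OF nonneg] .
    moreover from this have "(trunc i (Zs i \<omega>))\<^sup>2 \<le> (real i)\<^sup>2" for \<omega>
      by (simp flip: abs_le_square_iff)
    ultimately show "integrable M (\<lambda>\<omega>. trunc i (Zs i \<omega>))" "integrable M (\<lambda>\<omega>. (trunc i (Zs i \<omega>))\<^sup>2)"
      using that by (intro integrable_const_bound[where B="real i"] integrable_const_bound[where B="(real i)\<^sup>2"];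
          simp)+
  qed
  have T_moments: "expectation (\<lambda>\<omega>. trunc i (Zs i \<omega>)) = m i"
      "expectation (\<lambda>\<omega>. (trunc i (Zs i \<omega>))\<^sup>2) = q i" if "i \<ge> 1" for i
    unfolding m_def q_def
    using expectation_eq_if_distr_eq[OF dist[OF that] Zs[OF that], of "trunc i"]
      expectation_eq_if_distr_eq[OF dist[OF that] Zs[OF that], of "\<lambda>z. (trunc i z)\<^sup>2"] by auto
  have V: "integrable M (\<lambda>\<omega>. (V i \<omega>)\<^sup>2)" "expectation (V i) = 0"
    "expectation (\<lambda>\<omega>. (V i \<omega>)\<^sup>2) \<le> q i" if "i \<ge> 1" for i
  proof -
    show "integrable M (\<lambda>\<omega>. (V i \<omega>)\<^sup>2)" "expectation (V i) = 0"
      using T_int[OF that] T_moments[OF that] by (auto simp: V_def[abs_def] power2_diff prob_space)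
    have "expectation (\<lambda>\<omega>. (V i \<omega>)\<^sup>2) = q i - (m i)\<^sup>2"
      using variance_eq[OF T_int[OF that]] T_moments[OF that] by (simp add: V_def)
    then show "expectation (\<lambda>\<omega>. (V i \<omega>)\<^sup>2) \<le> q i" by simp
  qed
  have V_indep: "indep_vars (\<lambda>_. borel) V {1..}"
  proof -
    have "indep_vars (\<lambda>_. borel) (\<lambda>i \<omega>. trunc i (Zs i \<omega>) - m i) {1..}"
      by (rule indep_vars_compose2[OF indep]) measurable
    then show ?thesis by (simp add: V_def[abs_def])
  qed
  have U_eq: "U N \<omega> = (\<Sum>i\<in>{1..N}. V i \<omega>)" for \<omega> by (simp add: U_def V_def m_def)
  show "integrable M (\<lambda>\<omega>. (U N \<omega>)\<^sup>2)"
    unfolding U_eq using V by (intro expectation_square_sum_indep(1)[OF V_indep]) auto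
  have "expectation (\<lambda>\<omega>. (U N \<omega>)\<^sup>2) = (\<Sum>i=1..N. expectation (\<lambda>\<omega>. (V i \<omega>)\<^sup>2))"
    unfolding U_eq using V by (intro expectation_square_sum_indep(2)[OF V_indep]) auto
  also have "\<dots> \<le> (\<Sum>i=1..N. q i)" using V by (intro sum_mono) auto
  finally show "expectation (\<lambda>\<omega>. (U N \<omega>)\<^sup>2) \<le> (\<Sum>i=1..N. expectation (\<lambda>\<omega>. (trunc i (Z \<omega>))\<^sup>2))"
    by (simp add: q_def)
qed

lemma AE_mean_n_tendsto_nonneg:
  fixes Z :: "'a \<Rightarrow> real" and Zs :: "nat \<Rightarrow> 'a \<Rightarrow> real"
  assumes indep: "indep_vars (\<lambda>_. borel) Zs {1..}"
    and dist: "\<And>i. i \<ge> 1 \<Longrightarrow> distr M borel (Zs i) = distr M borel Z"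
    and [measurable]: "Z \<in> borel_measurable M" and int: "integrable M Z"
    and nonneg: "\<And>\<omega>. Z \<omega> \<ge> 0" "\<And>i \<omega>. Zs i \<omega> \<ge> 0"
  shows "AE \<omega> in M. (\<lambda>n. mean_n n (\<lambda>k. Zs k \<omega>)) \<longlonglongrightarrow> expectation Z"
proof -
  have Zs[measurable]: "Zs i \<in> borel_measurable M" if "i \<ge> 1" for i
    using indep that unfolding indep_vars_def by auto
  define m where "m i = expectation (\<lambda>\<omega>. trunc i (Z \<omega>))" for i
  define U where "U N \<omega> = (\<Sum>i=1..N. trunc i (Zs i \<omega>) - m i)" for N \<omega>
  have [measurable]: "U N \<in> borel_measurable M" for N unfolding U_def by measurable
  have U_int: "integrable M (\<lambda>\<omega>. (U N \<omega>)\<^sup>2)" for N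
    using second_moment_truncated_sum(1)[OF indep dist _ nonneg(2)] by (simp add: U_def m_def)
  have U_moment: "expectation (\<lambda>\<omega>. (U N \<omega>)\<^sup>2) \<le> (\<Sum>i=1..N. expectation (\<lambda>\<omega>. (trunc i (Z \<omega>))\<^sup>2))" for N
    using second_moment_truncated_sum(2)[OF indep dist _ nonneg(2)] by (simp add: U_def m_def)
  have "AE \<omega> in M. (\<lambda>n. U (geom_subseq (1 + 1 / (real j + 1)) n) \<omega>
                        / real (geom_subseq (1 + 1 / (real j + 1)) n)) \<longlonglongrightarrow> 0" for j :: nat
  proof (rule AE_tendsto_zero_along_geom_subseq[OF _ _ U_int U_moment])
    show "(\<Sum>i=1..K. expectation (\<lambda>\<omega>. (trunc i (Z \<omega>))\<^sup>2) / (real i)\<^sup>2) \<le> 2 * expectation Z" for K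
      using sum_expectation_trunc_square_le[OF _ int] nonneg(1) by simp
  qed auto
  then have "AE \<omega> in M. \<forall>j::nat. (\<lambda>n. U (geom_subseq (1 + 1 / (real j + 1)) n) \<omega>
                        / real (geom_subseq (1 + 1 / (real j + 1)) n)) \<longlonglongrightarrow> 0"
    by (simp add: AE_all_countable)
  moreover have "AE \<omega> in M. eventually (\<lambda>i. Zs i \<omega> \<le> real i) sequentially"
    using AE_eventually_le_index[OF dist Zs] int nonneg by auto
  ultimately show ?thesis
  proof eventually_elim
    case (elim \<omega>)
    have "eventually (\<lambda>i. Zs i \<omega> = trunc i (Zs i \<omega>)) sequentially"
      using elim(2) by (rule eventually_mono) (simp add: trunc_def)
    moreover have "(\<lambda>n. mean_n n m) \<longlonglongrightarrow> expectation Z"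
      unfolding m_def by (rule tendsto_mean_n[OF expectation_trunc_tendsto[OF _ int]]) simp
    moreover have "(\<lambda>n. (\<Sum>i=1..geom_subseq (1 + 1 / (real j + 1)) n. trunc i (Zs i \<omega>) - m i)
        / real (geom_subseq (1 + 1 / (real j + 1)) n)) \<longlonglongrightarrow> 0" for j :: nat
      using elim(1) by (simp add: U_def)
    ultimately show ?case by (rule tendsto_mean_n_truncated[OF nonneg(2)])
  qed
qed

theorem strong_law_of_large_numbers:
  fixes Z :: "'a \<Rightarrow> real" and Zs :: "nat \<Rightarrow> 'a \<Rightarrow> real"
  assumes indep: "indep_vars (\<lambda>_. borel) Zs {1..}"
    and dist: "\<And>i. i \<ge> 1 \<Longrightarrow> distr M borel (Zs i) = distr M borel Z"
    and [measurable]: "Z \<in> borel_measurable M" and int: "integrable M Z"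
  shows "AE \<omega> in M. (\<lambda>n. mean_n n (\<lambda>k. Zs k \<omega>)) \<longlonglongrightarrow> expectation Z"
proof -
  have Zs: "Zs i \<in> borel_measurable M" if "i \<ge> 1" for i
    using indep that unfolding indep_vars_def by auto
  have part: "AE \<omega> in M. (\<lambda>n. mean_n n (\<lambda>k. g (Zs k \<omega>))) \<longlonglongrightarrow> expectation (\<lambda>\<omega>. g (Z \<omega>))"
    if g: "g = (\<lambda>z. max z 0) \<or> g = (\<lambda>z. max (- z) 0)" for g :: "real \<Rightarrow> real"
  proof (rule AE_mean_n_tendsto_nonneg)
    have [measurable]: "g \<in> borel_measurable borel" using g by auto
    show "indep_vars (\<lambda>_. borel) (\<lambda>i \<omega>. g (Zs i \<omega>)) {1..}"
      by (rule indep_vars_compose2[OF indep]) simp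
    show "distr M borel (\<lambda>\<omega>. g (Zs i \<omega>)) = distr M borel (\<lambda>\<omega>. g (Z \<omega>))" if "i \<ge> 1" for i
      by (rule distr_comp_eq_if_distr_eq[OF dist[OF that] Zs[OF that]]) measurable
    show "(\<lambda>\<omega>. g (Z \<omega>)) \<in> borel_measurable M" by simp
  qed (use g int in \<open>auto intro: integrable_max\<close>)
  have "expectation Z = expectation (\<lambda>\<omega>. max (Z \<omega>) 0 - max (- Z \<omega>) 0)"
    by (rule Bochner_Integration.integral_cong) auto
  also have "\<dots> = expectation (\<lambda>\<omega>. max (Z \<omega>) 0) - expectation (\<lambda>\<omega>. max (- Z \<omega>) 0)"
    using int by (intro Bochner_Integration.integral_diff integrable_max) auto
  finally have E: "expectation Z = \<dots>" .
  have mean: "mean_n n (\<lambda>k. Zs k \<omega>)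
      = mean_n n (\<lambda>k. max (Zs k \<omega>) 0) - mean_n n (\<lambda>k. max (- Zs k \<omega>) 0)" for n \<omega>
  proof -
    have "(\<Sum>k=1..n. Zs k \<omega>) = (\<Sum>k=1..n. max (Zs k \<omega>) 0 - max (- Zs k \<omega>) 0)"
      by (intro sum.cong) auto
    then show ?thesis by (simp add: mean_n_def sum_subtractf diff_divide_distrib)
  qed
  from part[OF disjI1[OF refl]] part[OF disjI2[OF refl]] show ?thesis
    unfolding E mean by eventually_elim (rule tendsto_diff)
qed

corollary strong_law_of_large_numbers_comp:
  fixes P :: "'a \<Rightarrow> 'b::topological_space" and Ps :: "nat \<Rightarrow> 'a \<Rightarrow> 'b" and h :: "'b \<Rightarrow> real"
  assumes indep: "indep_vars (\<lambda>_. borel) Ps {1..}"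
    and dist: "\<And>i. i \<ge> 1 \<Longrightarrow> distr M borel (Ps i) = distr M borel P"
    and [measurable]: "P \<in> borel_measurable M" "h \<in> borel_measurable borel"
    and "integrable M (\<lambda>\<omega>. h (P \<omega>))"
  shows "AE \<omega> in M. (\<lambda>n. mean_n n (\<lambda>k. h (Ps k \<omega>))) \<longlonglongrightarrow> expectation (\<lambda>\<omega>. h (P \<omega>))"
proof (rule strong_law_of_large_numbers)
  show "indep_vars (\<lambda>_. borel) (\<lambda>i \<omega>. h (Ps i \<omega>)) {1..}"
    by (rule indep_vars_compose2[OF indep]) simp
  show "distr M borel (\<lambda>\<omega>. h (Ps i \<omega>)) = distr M borel (\<lambda>\<omega>. h (P \<omega>))" if "i \<ge> 1" for i
  proof (rule distr_comp_eq_if_distr_eq[OF dist[OF that]])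
    show "Ps i \<in> borel_measurable M" using indep that unfolding indep_vars_def by simp
  qed measurable
qed (use assms in auto)

end

section \<open>The Glivenko--Cantelli theorem\<close>

lemma (in real_distribution) exists_cdf_ge_measure_lessThan_le:
  assumes c: "0 < c" "c < 1"
  obtains t where "c \<le> cdf M t" "measure M {..<t} \<le> c"
proof -
  define S where "S = {t. c \<le> cdf M t}"
  have "eventually (\<lambda>t. cdf M t > c) at_top"
    using cdf_lim_at_top_prob c by (auto intro: order_tendstoD)
  then obtain t1 where "cdf M t1 > c" by (metis eventually_at_top_linorder order_refl)
  then have S_ne: "S \<noteq> {}" unfolding S_def using less_imp_le by blast
  have "eventually (\<lambda>t. cdf M t < c) at_bot"
    using cdf_lim_at_bot c by (auto intro: order_tendstoD)
  then obtain b where b: "\<And>t. t \<le> b \<Longrightarrow> cdf M t < c" unfolding eventually_at_bot_linorder by blast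
  have bdd: "bdd_below S"
  proof (rule bdd_belowI[of _ b])
    fix x assume "x \<in> S"
    then show "b \<le> x" using b[of x] unfolding S_def by (cases "x \<le> b") auto
  qed
  define t0 where "t0 = Inf S"
  have "c \<le> cdf M t0"
  proof (rule tendsto_lowerbound)
    show "(cdf M \<longlongrightarrow> cdf M t0) (at_right t0)"
      using cdf_is_right_cont[of t0] unfolding continuous_within by simp
    show "eventually (\<lambda>s. c \<le> cdf M s) (at_right t0)"
      unfolding eventually_at_right_field
    proof (intro exI[of _ "t0 + 1"] conjI allI impI)
      fix s assume "t0 < s" "s < t0 + 1"
      then obtain s' where "s' \<in> S" "s' < s" using S_ne unfolding t0_def by (metis cInf_lessD)
      then show "c \<le> cdf M s" unfolding S_def using cdf_nondecreasing[of s' s] by simp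
    qed simp
  qed simp
  moreover have "measure M {..<t0} \<le> c"
  proof (rule tendsto_upperbound)
    show "(cdf M \<longlongrightarrow> measure M {..<t0}) (at_left t0)" by (rule cdf_at_left)
    show "eventually (\<lambda>s. cdf M s \<le> c) (at_left t0)"
      unfolding eventually_at_left_field
    proof (intro exI[of _ "t0 - 1"] conjI allI impI)
      fix s assume "t0 - 1 < s" "s < t0"
      then have "s \<notin> S" using cInf_lower[OF _ bdd, of s] unfolding t0_def by force
      then show "cdf M s \<le> c" unfolding S_def by simp
    qed simp
  qed simp
  ultimately show ?thesis by (rule that)
qed

lemma abs_diff_le_from_grid:
  fixes F L G Gl :: "real \<Rightarrow> real" and t :: "nat \<Rightarrow> real" and N :: nat and e :: real
  assumes N: "N \<ge> 1" and e: "e \<ge> 0"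
    and Fmono: "mono F" and Gmono: "mono G"
    and F01: "\<And>x. 0 \<le> F x \<and> F x \<le> 1" and G01: "\<And>x. 0 \<le> G x \<and> G x \<le> 1"
    and FL: "\<And>y s. y < s \<Longrightarrow> F y \<le> L s" and GGl: "\<And>y s. y < s \<Longrightarrow> G y \<le> Gl s"
    and tF: "\<And>j. j \<in> {1..<N} \<Longrightarrow> real j / real N \<le> F (t j)"
    and tL: "\<And>j. j \<in> {1..<N} \<Longrightarrow> L (t j) \<le> real j / real N"
    and eG: "\<And>j. j \<in> {1..<N} \<Longrightarrow> \<bar>G (t j) - F (t j)\<bar> \<le> e"
    and eGl: "\<And>j. j \<in> {1..<N} \<Longrightarrow> \<bar>Gl (t j) - L (t j)\<bar> \<le> e"
  shows "\<bar>G y - F y\<bar> \<le> 1 / real N + e"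
proof -
  \<comment> \<open>Squeeze y between the grid points t j0 \<le> y < t (j0 + 1), where F rises by at most 1/N.\<close>
  define J where "J = {j\<in>{1..<N}. t j \<le> y}"
  have finJ: "finite J" unfolding J_def by simp
  define j0 where "j0 = (if J = {} then 0 else Max J)"
  have Npos: "real N > 0" using N by simp
  have lower: "real j0 / real N \<le> F y \<and> real j0 / real N - e \<le> G y"
  proof (cases "J = {}")
    case True
    then show ?thesis unfolding j0_def using F01[of y] G01[of y] e by simp
  next
    case False
    then have "j0 \<in> J" unfolding j0_def using finJ by (simp add: Max_in)
    then have j1: "j0 \<in> {1..<N}" and ty: "t j0 \<le> y" unfolding J_def by auto
    have "real j0 / real N \<le> F (t j0)" by (rule tF[OF j1])
    also have "\<dots> \<le> F y" using Fmono ty by (rule monoD)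
    finally have a: "real j0 / real N \<le> F y" .
    have "real j0 / real N - e \<le> F (t j0) - e" using tF[OF j1] by simp
    also have "\<dots> \<le> G (t j0)" using eG[OF j1] by linarith
    also have "\<dots> \<le> G y" using Gmono ty by (rule monoD)
    finally show ?thesis using a by simp
  qed
  have upper: "F y \<le> (real j0 + 1) / real N \<and> G y \<le> (real j0 + 1) / real N + e"
  proof (cases "Suc j0 < N")
    case False
    then have "real j0 + 1 \<ge> real N" by simp
    then have "1 \<le> (real j0 + 1) / real N" using Npos by simp
    then show ?thesis using F01[of y] G01[of y] e by linarith
  next
    case True
    have j1: "Suc j0 \<in> {1..<N}" using True by simp
    have "Suc j0 \<notin> J"
    proof
      assume "Suc j0 \<in> J"
      then have "J \<noteq> {}" by auto
      then have "Suc j0 \<le> Max J" using finJ \<open>Suc j0 \<in> J\<close> by simp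
      then show False using \<open>J \<noteq> {}\<close> unfolding j0_def by simp
    qed
    then have yt: "y < t (Suc j0)" unfolding J_def using j1 by auto
    have "F y \<le> L (t (Suc j0))" by (rule FL[OF yt])
    also have "\<dots> \<le> real (Suc j0) / real N" by (rule tL[OF j1])
    finally have a: "F y \<le> (real j0 + 1) / real N" by (simp add: add.commute)
    have "G y \<le> Gl (t (Suc j0))" by (rule GGl[OF yt])
    also have "\<dots> \<le> L (t (Suc j0)) + e" using eGl[OF j1] by linarith
    also have "\<dots> \<le> real (Suc j0) / real N + e" using tL[OF j1] by simp
    finally show ?thesis using a by (simp add: add.commute)
  qed
  have d: "(real j0 + 1) / real N - real j0 / real N = 1 / real N"
    using Npos by (simp add: field_simps)
  show ?thesis using lower upper d by linarith
qed

lemma uniform_convergence_from_grid: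
  fixes G Gl :: "nat \<Rightarrow> real \<Rightarrow> real" and F L :: "real \<Rightarrow> real" and t :: "nat \<Rightarrow> nat \<Rightarrow> real"
  assumes F: "mono F" "\<And>x. 0 \<le> F x \<and> F x \<le> 1" "\<And>y s. y < s \<Longrightarrow> F y \<le> L s"
    and G: "\<And>n. mono (G n)" "\<And>n x. 0 \<le> G n x \<and> G n x \<le> 1" "\<And>n y s. y < s \<Longrightarrow> G n y \<le> Gl n s"
    and grid: "\<And>N j. 1 \<le> j \<Longrightarrow> j < N \<Longrightarrow> real j / real N \<le> F (t N j) \<and> L (t N j) \<le> real j / real N"
    and conv: "\<And>N j. (\<lambda>n. G n (t N j)) \<longlonglongrightarrow> F (t N j)" "\<And>N j. (\<lambda>n. Gl n (t N j)) \<longlonglongrightarrow> L (t N j)"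
  shows "\<forall>\<epsilon>>0. eventually (\<lambda>n. \<forall>y. \<bar>G n y - F y\<bar> \<le> \<epsilon>) sequentially"
proof (intro allI impI)
  fix \<epsilon> :: real assume "\<epsilon> > 0"
  then have e: "\<epsilon> / 2 > 0" by simp
  obtain N :: nat where N: "N > 0" "inverse (real N) < \<epsilon> / 2"
    using ex_inverse_of_nat_less[OF e] by blast
  have "eventually (\<lambda>n. \<forall>j\<in>{1..<N}. \<bar>G n (t N j) - F (t N j)\<bar> \<le> \<epsilon> / 2
                          \<and> \<bar>Gl n (t N j) - L (t N j)\<bar> \<le> \<epsilon> / 2) sequentially"
  proof (rule eventually_ball_finite[OF finite_atLeastLessThan], rule ballI)
    fix j
    show "eventually (\<lambda>n. \<bar>G n (t N j) - F (t N j)\<bar> \<le> \<epsilon> / 2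
                          \<and> \<bar>Gl n (t N j) - L (t N j)\<bar> \<le> \<epsilon> / 2) sequentially"
      using tendstoD[OF conv(1) e, of N j] tendstoD[OF conv(2) e, of N j]
      by eventually_elim (simp add: dist_real_def)
  qed
  then show "eventually (\<lambda>n. \<forall>y. \<bar>G n y - F y\<bar> \<le> \<epsilon>) sequentially"
  proof eventually_elim
    case (elim n)
    have bound: "\<bar>G n y - F y\<bar> \<le> 1 / real N + \<epsilon> / 2" for y
      using N(1) e F G grid elim
      by (intro abs_diff_le_from_grid[where L=L and Gl="Gl n" and t="t N"]) auto
    have "1 / real N < \<epsilon> / 2" using N(2) by (simp add: inverse_eq_divide)
    show ?case
    proof
      fix y show "\<bar>G n y - F y\<bar> \<le> \<epsilon>" using bound[of y] \<open>1 / real N < \<epsilon> / 2\<close> by linarith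
    qed
  qed
qed

definition ecdf :: "nat \<Rightarrow> (nat \<Rightarrow> real) \<Rightarrow> real \<Rightarrow> real" where
  "ecdf n ys t = mean_n n (\<lambda>k. if ys k \<le> t then 1 else 0)"

definition ecdf_left :: "nat \<Rightarrow> (nat \<Rightarrow> real) \<Rightarrow> real \<Rightarrow> real" where
  "ecdf_left n ys t = mean_n n (\<lambda>k. if ys k < t then 1 else 0)"

lemma mean_n_mono: "(\<And>k. a k \<le> b k) \<Longrightarrow> mean_n n a \<le> mean_n n b"
  unfolding mean_n_def by (intro divide_right_mono sum_mono) auto

lemma mono_ecdf: "mono (ecdf n ys)"
  unfolding ecdf_def by (intro monoI mean_n_mono) auto

lemma ecdf_le_ecdf_left: "y < s \<Longrightarrow> ecdf n ys y \<le> ecdf_left n ys s"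
  unfolding ecdf_def ecdf_left_def by (intro mean_n_mono) auto

lemma ecdf_bounds: "0 \<le> ecdf n ys t \<and> ecdf n ys t \<le> 1"
proof -
  have "mean_n n (\<lambda>_. 0) \<le> ecdf n ys t" "ecdf n ys t \<le> mean_n n (\<lambda>_. 1)"
    unfolding ecdf_def by (intro mean_n_mono; simp)+
  moreover have "mean_n n (\<lambda>_. 0) = 0" "mean_n n (\<lambda>_. 1) \<le> 1"
    by (simp_all add: mean_n_def)
  ultimately show ?thesis by linarith
qed

lemma emp_cdf_eq_ecdf: "emp_cdf n ys t = real n / (real n + 1) * ecdf n ys t"
  by (cases "n = 0") (simp_all add: emp_cdf_def ecdf_def mean_n_def)

lemma abs_emp_cdf_minus_ecdf_le: "\<bar>emp_cdf n ys t - ecdf n ys t\<bar> \<le> 1 / (real n + 1)"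
proof -
  have "emp_cdf n ys t - ecdf n ys t = - ecdf n ys t / (real n + 1)"
    by (simp add: emp_cdf_eq_ecdf field_simps)
  then show ?thesis using ecdf_bounds[of n ys t] by (simp add: abs_divide divide_right_mono)
qed

lemma uniform_convergence_emp_cdf:
  assumes ecdf: "\<forall>\<epsilon>>0. eventually (\<lambda>n. \<forall>y. \<bar>ecdf n ys y - F y\<bar> \<le> \<epsilon>) sequentially"
  shows "\<forall>\<epsilon>>0. eventually (\<lambda>n. \<forall>y. \<bar>emp_cdf n ys y - F y\<bar> \<le> \<epsilon>) sequentially"
proof (intro allI impI)
  fix \<epsilon> :: real assume "\<epsilon> > 0"
  then have e: "\<epsilon> / 2 > 0" by simp
  have "eventually (\<lambda>n. inverse (real (Suc n)) < \<epsilon> / 2) sequentially"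
    using order_tendstoD(2)[OF LIMSEQ_inverse_real_of_nat e] .
  with ecdf[rule_format, OF e]
  show "eventually (\<lambda>n. \<forall>y. \<bar>emp_cdf n ys y - F y\<bar> \<le> \<epsilon>) sequentially"
  proof eventually_elim
    case (elim n)
    then have "1 / (real n + 1) < \<epsilon> / 2" by (simp add: inverse_eq_divide add.commute)
    show ?case
    proof (intro allI)
      fix y
      show "\<bar>emp_cdf n ys y - F y\<bar> \<le> \<epsilon>"
        using elim(1)[rule_format, of y] abs_emp_cdf_minus_ecdf_le[of n ys y] \<open>1 / (real n + 1) < \<epsilon> / 2\<close>
        by arith
    qed
  qed
qed

context prob_space
begin

lemma expectation_indicator_eq_measure_distr:
  assumes [measurable]: "Y \<in> borel_measurable M" "S \<in> sets borel"
  shows "expectation (\<lambda>\<omega>. if Y \<omega> \<in> S then 1 else 0 :: real) = measure (distr M borel Y) S"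
proof -
  have "expectation (\<lambda>\<omega>. if Y \<omega> \<in> S then 1 else 0 :: real) = expectation (indicator (Y -` S \<inter> space M))"
    by (rule Bochner_Integration.integral_cong) (auto simp: indicator_def)
  then show ?thesis by (simp add: measure_distr measurable_sets[OF assms])
qed

theorem Glivenko_Cantelli:
  fixes Y :: "'a \<Rightarrow> real" and Ys :: "nat \<Rightarrow> 'a \<Rightarrow> real"
  assumes indep: "indep_vars (\<lambda>_. borel) Ys {1..}"
    and dist: "\<And>i. i \<ge> 1 \<Longrightarrow> distr M borel (Ys i) = distr M borel Y"
    and [measurable]: "Y \<in> borel_measurable M"
  shows "AE \<omega> in M. \<forall>\<epsilon>>0. eventually
           (\<lambda>n. \<forall>y. \<bar>ecdf n (\<lambda>k. Ys k \<omega>) y - cdf (distr M borel Y) y\<bar> \<le> \<epsilon>) sequentially"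
proof -
  interpret D: real_distribution "distr M borel Y" by simp
  define F where "F = cdf (distr M borel Y)"
  define L where "L t = measure (distr M borel Y) {..<t}" for t
  \<comment> \<open>t N j is a (j/N)-quantile of Y.\<close>
  define t where "t N j = (SOME t. real j / real N \<le> F t \<and> L t \<le> real j / real N)" for N j :: nat
  have grid: "real j / real N \<le> F (t N j) \<and> L (t N j) \<le> real j / real N"
    if "1 \<le> j" "j < N" for N j :: nat
  proof -
    have "0 < real j / real N" "real j / real N < 1" using that by auto
    then have "\<exists>t. real j / real N \<le> F t \<and> L t \<le> real j / real N"
      unfolding F_def L_def by (metis D.exists_cdf_ge_measure_lessThan_le)
    then show ?thesis unfolding t_def by (rule someI_ex)
  qed
  have slln_indicator: "AE \<omega> in M. (\<lambda>n. mean_n n (\<lambda>k. if Ys k \<omega> \<in> S then 1 else 0))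
      \<longlonglongrightarrow> measure (distr M borel Y) S" if [measurable]: "S \<in> sets borel" for S
    using strong_law_of_large_numbers_comp[OF indep dist, where h="\<lambda>y. if y \<in> S then 1 else 0"]
    by (simp add: expectation_indicator_eq_measure_distr integrable_const_bound[where B=1])
  have "AE \<omega> in M. \<forall>p::nat \<times> nat. (\<lambda>n. ecdf n (\<lambda>k. Ys k \<omega>) (t (fst p) (snd p))) \<longlonglongrightarrow> F (t (fst p) (snd p))
      \<and> (\<lambda>n. ecdf_left n (\<lambda>k. Ys k \<omega>) (t (fst p) (snd p))) \<longlonglongrightarrow> L (t (fst p) (snd p))"
    unfolding AE_all_countable
    using slln_indicator[of "{..t _ _}"] slln_indicator[of "{..<t _ _}"]
    by (auto simp: ecdf_def ecdf_left_def F_def L_def cdf_def intro: AE_conjI)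
  then show ?thesis
  proof eventually_elim
    case (elim \<omega>)
    show ?case unfolding F_def[symmetric]
    proof (rule uniform_convergence_from_grid[where Gl="\<lambda>n. ecdf_left n (\<lambda>k. Ys k \<omega>)" and L=L and t=t])
      show "mono F" unfolding F_def by (intro monoI D.cdf_nondecreasing)
      show "0 \<le> F x \<and> F x \<le> 1" for x unfolding F_def using D.cdf_nonneg D.cdf_bounded_prob by blast
      show "F y \<le> L s" if "y < s" for y s
        unfolding F_def L_def cdf_def using that by (intro D.finite_measure_mono) auto
    qed (use grid elim in \<open>auto simp: mono_ecdf ecdf_bounds ecdf_le_ecdf_left\<close>)
  qed
qed

corollary Glivenko_Cantelli_emp_cdf:
  fixes Y :: "'a \<Rightarrow> real" and Ys :: "nat \<Rightarrow> 'a \<Rightarrow> real"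
  assumes "indep_vars (\<lambda>_. borel) Ys {1..}"
    and "\<And>i. i \<ge> 1 \<Longrightarrow> distr M borel (Ys i) = distr M borel Y"
    and "Y \<in> borel_measurable M"
  shows "AE \<omega> in M. \<forall>\<epsilon>>0. eventually
           (\<lambda>n. \<forall>y. \<bar>emp_cdf n (\<lambda>k. Ys k \<omega>) y - cdf (distr M borel Y) y\<bar> \<le> \<epsilon>) sequentially"
proof -
  have "AE \<omega> in M. \<forall>\<epsilon>>0. eventually
           (\<lambda>n. \<forall>y. \<bar>ecdf n (\<lambda>k. Ys k \<omega>) y - cdf (distr M borel Y) y\<bar> \<le> \<epsilon>) sequentially"
    by (rule Glivenko_Cantelli) (use assms in auto)
  then show ?thesis by eventually_elim (rule uniform_convergence_emp_cdf)
qed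

end

section \<open>Consistency of the estimators\<close>

lemma tendsto_mean_n_uniform_perturb:
  fixes x u :: "nat \<Rightarrow> real" and z :: "nat \<Rightarrow> nat \<Rightarrow> real"
  assumes A: "(\<lambda>n. mean_n n (\<lambda>k. x k * u k)) \<longlonglongrightarrow> A"
    and B: "(\<lambda>n. mean_n n (\<lambda>k. \<bar>x k\<bar>)) \<longlonglongrightarrow> B"
    and uniform: "\<forall>\<epsilon>>0. eventually (\<lambda>n. \<forall>k. \<bar>z n k - u k\<bar> \<le> \<epsilon>) sequentially"
  shows "(\<lambda>n. mean_n n (\<lambda>k. x k * z n k)) \<longlonglongrightarrow> A"
proof -
  define d where "d n = mean_n n (\<lambda>k. x k * (z n k - u k))" for n
  have B0: "B \<ge> 0"
    by (rule tendsto_lowerbound[OF B])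
      (auto simp: mean_n_def intro!: always_eventually divide_nonneg_nonneg sum_nonneg)
  have "d \<longlonglongrightarrow> 0"
  proof (rule LIMSEQ_I)
    fix r :: real assume r: "r > 0"
    define \<epsilon> where "\<epsilon> = r / (B + 2)"
    have eps: "\<epsilon> > 0" unfolding \<epsilon>_def using r B0 by simp
    have "\<epsilon> * (B + 1) < r"
      using r B0 by (simp add: \<epsilon>_def field_simps)
    have "eventually (\<lambda>n. \<forall>k. \<bar>z n k - u k\<bar> \<le> \<epsilon>) sequentially" using uniform eps by blast
    moreover have "eventually (\<lambda>n. mean_n n (\<lambda>k. \<bar>x k\<bar>) < B + 1) sequentially"
      using B by (rule order_tendstoD) simp
    ultimately have "eventually (\<lambda>n. norm (d n - 0) < r) sequentially"
    proof eventually_elim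
      case (elim n)
      have "\<bar>\<Sum>k=1..n. x k * (z n k - u k)\<bar> \<le> (\<Sum>k=1..n. \<bar>x k\<bar> * \<epsilon>)"
        using elim(1) by (intro order.trans[OF sum_abs] sum_mono) (auto simp: abs_mult mult_left_mono)
      then have "\<bar>d n\<bar> \<le> \<epsilon> * mean_n n (\<lambda>k. \<bar>x k\<bar>)"
        by (simp add: d_def mean_n_def abs_divide divide_right_mono sum_distrib_left mult.commute)
      also have "\<dots> \<le> \<epsilon> * (B + 1)" using elim(2) eps by (intro mult_left_mono) auto
      finally show ?case using \<open>\<epsilon> * (B + 1) < r\<close> by simp
    qed
    then show "\<exists>no. \<forall>n\<ge>no. norm (d n - 0) < r" unfolding eventually_sequentially by blast
  qed
  with A have "(\<lambda>n. mean_n n (\<lambda>k. x k * u k) + d n) \<longlonglongrightarrow> A + 0"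
    by (intro tendsto_add)
  moreover have "mean_n n (\<lambda>k. x k * u k) + d n = mean_n n (\<lambda>k. x k * z n k)" for n
    by (simp add: d_def mean_n_def add_divide_distrib[symmetric] sum.distrib[symmetric] algebra_simps)
  ultimately show ?thesis by simp
qed

definition emp_cov :: "nat \<Rightarrow> (nat \<Rightarrow> real) \<Rightarrow> (nat \<Rightarrow> real) \<Rightarrow> real" where
  "emp_cov n a b = mean_n n (\<lambda>k. a k * b k) - mean_n n a * mean_n n b"

lemma sum_centered_products:
  assumes "n \<ge> 1"
  shows "(\<Sum>k=1..n. (a k - mean_n n a) * (b k - mean_n n b)) = real n * emp_cov n a b"
proof -
  have sum_eq: "(\<Sum>k=1..n. c k) = real n * mean_n n c" for c
    using assms by (simp add: mean_n_def)
  define p q where "p = mean_n n a" and "q = mean_n n b"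
  have "(\<Sum>k=1..n. (a k - p) * (b k - q)) = (\<Sum>k=1..n. a k * b k - q * a k - p * b k + p * q)"
    by (intro sum.cong) (auto simp: algebra_simps)
  also have "\<dots> = (\<Sum>k=1..n. a k * b k) - q * (\<Sum>k=1..n. a k) - p * (\<Sum>k=1..n. b k) + real n * (p * q)"
    by (simp add: sum.distrib sum_subtractf sum_distrib_left)
  also have "\<dots> = real n * emp_cov n a b"
    by (simp only: sum_eq) (simp add: emp_cov_def p_def q_def algebra_simps)
  finally show ?thesis by (simp only: p_def q_def)
qed

lemma beta_hat_eq_emp_cov:
  assumes "n \<ge> 1"
  shows "beta_hat n x y = emp_cov n x y / emp_cov n y y"
  using assms
  by (simp only: beta_hat_def power2_eq_square sum_centered_products[OF assms]) simp

lemma beta_G_hat_eq_emp_cov: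
  assumes "n \<ge> 1"
  shows "beta_G_hat w n x y
    = emp_cov n x (\<lambda>k. w (emp_cdf n y (y k))) / emp_cov n y (\<lambda>k. w (emp_cdf n y (y k)))"
  using assms
  by (simp only: beta_G_hat_def Let_def sum_centered_products[OF assms]) simp

lemma tendsto_emp_cov:
  assumes "(\<lambda>n. mean_n n a) \<longlonglongrightarrow> A" "(\<lambda>n. mean_n n b) \<longlonglongrightarrow> B"
    and "(\<lambda>n. mean_n n (\<lambda>k. a k * b k)) \<longlonglongrightarrow> C"
  shows "(\<lambda>n. emp_cov n a b) \<longlonglongrightarrow> C - A * B"
  unfolding emp_cov_def by (intro tendsto_intros assms)

lemma tendsto_emp_cov_uniform_perturb:
  fixes a u :: "nat \<Rightarrow> real" and z :: "nat \<Rightarrow> nat \<Rightarrow> real"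
  assumes mean_a: "(\<lambda>n. mean_n n a) \<longlonglongrightarrow> A" and "(\<lambda>n. mean_n n (\<lambda>k. \<bar>a k\<bar>)) \<longlonglongrightarrow> B"
    and "(\<lambda>n. mean_n n (\<lambda>k. a k * u k)) \<longlonglongrightarrow> C" and mean_u: "(\<lambda>n. mean_n n u) \<longlonglongrightarrow> U"
    and uniform: "\<forall>\<epsilon>>0. eventually (\<lambda>n. \<forall>k. \<bar>z n k - u k\<bar> \<le> \<epsilon>) sequentially"
  shows "(\<lambda>n. emp_cov n a (z n)) \<longlonglongrightarrow> C - A * U"
proof -
  have "(\<lambda>n. mean_n n (\<lambda>k. a k * z n k)) \<longlonglongrightarrow> C"
    using assms(3,2) uniform by (rule tendsto_mean_n_uniform_perturb)
  moreover have "(\<lambda>n. mean_n n (\<lambda>k. 1 * z n k)) \<longlonglongrightarrow> U"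
  proof (rule tendsto_mean_n_uniform_perturb[OF _ _ uniform])
    show "(\<lambda>n. mean_n n (\<lambda>k. \<bar>1::real\<bar>)) \<longlonglongrightarrow> 1"
      by (rule tendsto_mean_n) simp
  qed (use mean_u in simp)
  ultimately show ?thesis
    unfolding emp_cov_def using mean_a by (intro tendsto_intros) simp_all
qed

lemma uniform_convergence_comp_continuous:
  fixes G :: "nat \<Rightarrow> 'a \<Rightarrow> real" and F :: "'a \<Rightarrow> real" and w :: "real \<Rightarrow> real"
  assumes w: "continuous_on {0..1} w"
    and range: "\<And>n t. G n t \<in> {0..1}" "\<And>t. F t \<in> {0..1}"
    and uniform: "\<forall>\<epsilon>>0. eventually (\<lambda>n. \<forall>t. \<bar>G n t - F t\<bar> \<le> \<epsilon>) sequentially"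
  shows "\<forall>\<epsilon>>0. eventually (\<lambda>n. \<forall>t. \<bar>w (G n t) - w (F t)\<bar> \<le> \<epsilon>) sequentially"
proof (intro allI impI)
  fix \<epsilon> :: real assume "\<epsilon> > 0"
  obtain d where "d > 0" and d: "\<And>a b. a \<in> {0..1} \<Longrightarrow> b \<in> {0..1} \<Longrightarrow> dist b a < d \<Longrightarrow> dist (w b) (w a) < \<epsilon>"
    using compact_uniformly_continuous[OF w compact_Icc] \<open>\<epsilon> > 0\<close>
    unfolding uniformly_continuous_on_def by metis
  have "eventually (\<lambda>n. \<forall>t. \<bar>G n t - F t\<bar> \<le> d / 2) sequentially"
    using uniform \<open>d > 0\<close> half_gt_zero by blast
  then show "eventually (\<lambda>n. \<forall>t. \<bar>w (G n t) - w (F t)\<bar> \<le> \<epsilon>) sequentially"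
  proof eventually_elim
    case (elim n)
    show ?case
    proof
      fix t
      have "dist (G n t) (F t) < d" using elim[rule_format, of t] \<open>d > 0\<close> by (simp add: dist_real_def)
      with d[OF range(2) range(1)] have "dist (w (G n t)) (w (F t)) < \<epsilon>" .
      then show "\<bar>w (G n t) - w (F t)\<bar> \<le> \<epsilon>" by (simp add: dist_real_def)
    qed
  qed
qed

lemma emp_cdf_bounds: "emp_cdf n ys t \<in> {0..1}"
proof -
  have "real n * ecdf n ys t \<le> real n" "0 \<le> ecdf n ys t"
    using ecdf_bounds[of n ys t] by (simp_all add: mult_left_le)
  then show ?thesis by (simp add: emp_cdf_eq_ecdf field_simps)
qed

lemma borel_measurable_continuous_on_comp_mono:
  fixes w F :: "real \<Rightarrow> real"
  assumes w: "continuous_on {0..1} w" and F: "mono F" "\<And>x. F x \<in> {0..1}"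
  shows "(\<lambda>x. w (F x)) \<in> borel_measurable borel"
proof -
  define w' where "w' z = w (max 0 (min 1 z))" for z
  have "continuous_on UNIV w'"
    unfolding w'_def by (rule continuous_on_compose2[OF w]) (auto intro!: continuous_intros)
  then have "(\<lambda>x. w' (F x)) \<in> borel_measurable borel"
    by (rule measurable_compose[OF borel_measurable_mono[OF F(1)] borel_measurable_continuous_onI])
  moreover have "w' (F x) = w (F x)" for x
    using F(2)[of x] by (simp add: w'_def)
  ultimately show ?thesis by simp
qed

lemma (in real_distribution) borel_measurable_bounded_comp_cdf:
  fixes w :: "real \<Rightarrow> real"
  assumes w: "continuous_on {0..1} w"
  shows "(\<lambda>x. w (cdf M x)) \<in> borel_measurable borel" and "\<exists>B. \<forall>x. \<bar>w (cdf M x)\<bar> \<le> B"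
proof -
  have range: "cdf M x \<in> {0..1}" for x by (simp add: cdf_nonneg cdf_bounded_prob)
  then show "(\<lambda>x. w (cdf M x)) \<in> borel_measurable borel"
    by (intro borel_measurable_continuous_on_comp_mono[OF w]) (auto simp: mono_def cdf_nondecreasing)
  obtain B where "\<forall>z\<in>w ` {0..1}. norm z \<le> B"
    using compact_imp_bounded[OF compact_continuous_image[OF w compact_Icc]] unfolding bounded_iff by blast
  then show "\<exists>B. \<forall>x. \<bar>w (cdf M x)\<bar> \<le> B" using range by (intro exI[of _ B]) auto
qed

lemma integrable_mult_bounded:
  fixes f g :: "'a \<Rightarrow> real"
  assumes f: "integrable M f" and g: "g \<in> borel_measurable M" and B: "\<And>x. \<bar>g x\<bar> \<le> B"
  shows "integrable M (\<lambda>x. f x * g x)"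
proof (rule Bochner_Integration.integrable_bound[OF integrable_mult_right[OF f, of B]])
  show "(\<lambda>x. f x * g x) \<in> borel_measurable M"
    using borel_measurable_integrable[OF f] g by measurable
  have "B \<ge> 0" using B[of undefined] by linarith
  have "norm (f x * g x) \<le> norm (B * f x)" for x
  proof -
    have "\<bar>f x\<bar> * \<bar>g x\<bar> \<le> \<bar>f x\<bar> * B" by (rule mult_left_mono[OF B abs_ge_zero])
    then show ?thesis using \<open>B \<ge> 0\<close> by (simp add: abs_mult mult.commute)
  qed
  then show "AE x in M. norm (f x * g x) \<le> norm (B * f x)" by simp
qed

lemma borel_measurable_fst[measurable]:
  "(fst :: 'a::topological_space \<times> 'b::topological_space \<Rightarrow> 'a) \<in> borel_measurable borel"
  by (intro borel_measurable_continuous_onI continuous_intros)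

lemma borel_measurable_snd[measurable]:
  "(snd :: 'a::topological_space \<times> 'b::topological_space \<Rightarrow> 'b) \<in> borel_measurable borel"
  by (intro borel_measurable_continuous_onI continuous_intros)

lemma (in prob_space) covar_eq_expectation:
  fixes U V :: "'a \<Rightarrow> real"
  assumes "integrable M U" "integrable M V" "integrable M (\<lambda>\<omega>. U \<omega> * V \<omega>)"
  shows "covar M U V = expectation (\<lambda>\<omega>. U \<omega> * V \<omega>) - expectation U * expectation V"
proof -
  define a b where "a = expectation U" and "b = expectation V"
  have "covar M U V = expectation (\<lambda>\<omega>. (U \<omega> * V \<omega> - b * U \<omega>) - (a * V \<omega> - a * b))"
    unfolding covar_def a_def b_def by (rule Bochner_Integration.integral_cong) (auto simp: algebra_simps)
  also have "\<dots> = expectation (\<lambda>\<omega>. U \<omega> * V \<omega>) - b * a - (a * b - a * b)"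
    using assms by (simp add: a_def b_def prob_space)
  finally show ?thesis by (simp add: a_def b_def)
qed

lemma (in prob_space) var_eq_expectation:
  fixes U :: "'a \<Rightarrow> real"
  assumes "integrable M U" "integrable M (\<lambda>\<omega>. (U \<omega>)\<^sup>2)"
  shows "var M U = expectation (\<lambda>\<omega>. (U \<omega>)\<^sup>2) - (expectation U)\<^sup>2"
  unfolding var_def using variance_eq[OF assms] by simp

locale iid_pairs = prob_space M for M :: "'a measure" +
  fixes X Y :: "'a \<Rightarrow> real" and Xs Ys :: "nat \<Rightarrow> 'a \<Rightarrow> real"
  assumes X[measurable]: "X \<in> borel_measurable M" and Y[measurable]: "Y \<in> borel_measurable M"
    and indep: "indep_vars (\<lambda>_. borel) (\<lambda>i \<omega>. (Xs i \<omega>, Ys i \<omega>)) {1..}"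
    and dist: "\<And>i. i \<ge> 1 \<Longrightarrow> distr M borel (\<lambda>\<omega>. (Xs i \<omega>, Ys i \<omega>)) = distr M borel (\<lambda>\<omega>. (X \<omega>, Y \<omega>))"
begin

lemma AE_mean_n_tendsto:
  assumes [measurable]: "h \<in> borel_measurable borel" and "integrable M (\<lambda>\<omega>. h (X \<omega>, Y \<omega>))"
  shows "AE \<omega> in M. (\<lambda>n. mean_n n (\<lambda>k. h (Xs k \<omega>, Ys k \<omega>))) \<longlonglongrightarrow> expectation (\<lambda>\<omega>. h (X \<omega>, Y \<omega>))"
  using strong_law_of_large_numbers_comp[OF indep dist, of h] assms by simp

lemma AE_emp_cdf_uniform:
  "AE \<omega> in M. \<forall>\<epsilon>>0. eventually
     (\<lambda>n. \<forall>y. \<bar>emp_cdf n (\<lambda>k. Ys k \<omega>) y - cdf_of M Y y\<bar> \<le> \<epsilon>) sequentially"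
  unfolding cdf_of_def
proof (rule Glivenko_Cantelli_emp_cdf)
  show "indep_vars (\<lambda>_. borel) Ys {1..}"
  proof -
    have "indep_vars (\<lambda>_. borel) (\<lambda>i \<omega>. snd (Xs i \<omega>, Ys i \<omega>)) {1..}"
      by (rule indep_vars_compose2[OF indep]) measurable
    then show ?thesis by simp
  qed
  show "distr M borel (Ys i) = distr M borel Y" if "i \<ge> 1" for i
  proof -
    have "(\<lambda>\<omega>. (Xs i \<omega>, Ys i \<omega>)) \<in> borel_measurable M"
      using indep that unfolding indep_vars_def by simp
    then show ?thesis
      using distr_comp_eq_if_distr_eq[OF dist[OF that], of snd] by simp
  qed
qed simp

lemma AE_beta_hat_tendsto:
  assumes int_X: "integrable M X" and int_Y2: "integrable M (\<lambda>\<omega>. (Y \<omega>)\<^sup>2)"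
    and int_XY: "integrable M (\<lambda>\<omega>. X \<omega> * Y \<omega>)" and var_pos: "var M Y > 0"
  shows "AE \<omega> in M. (\<lambda>n. beta_hat n (\<lambda>k. Xs k \<omega>) (\<lambda>k. Ys k \<omega>)) \<longlonglongrightarrow> beta_cl M X Y"
proof -
  have int_Y: "integrable M Y" using square_integrable_imp_integrable[OF Y int_Y2] .
  have beta_cl: "beta_cl M X Y = (expectation (\<lambda>\<omega>. X \<omega> * Y \<omega>) - expectation X * expectation Y)
      / (expectation (\<lambda>\<omega>. Y \<omega> * Y \<omega>) - expectation Y * expectation Y)"
    using covar_eq_expectation[OF int_X int_Y int_XY] var_eq_expectation[OF int_Y int_Y2]
    by (simp add: beta_cl_def power2_eq_square)
  have den: "expectation (\<lambda>\<omega>. Y \<omega> * Y \<omega>) - expectation Y * expectation Y \<noteq> 0"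
    using var_pos var_eq_expectation[OF int_Y int_Y2] by (simp add: power2_eq_square)
  have "AE \<omega> in M. (\<lambda>n. mean_n n (\<lambda>k. Xs k \<omega>)) \<longlonglongrightarrow> expectation X"
    "AE \<omega> in M. (\<lambda>n. mean_n n (\<lambda>k. Ys k \<omega>)) \<longlonglongrightarrow> expectation Y"
    "AE \<omega> in M. (\<lambda>n. mean_n n (\<lambda>k. Xs k \<omega> * Ys k \<omega>)) \<longlonglongrightarrow> expectation (\<lambda>\<omega>. X \<omega> * Y \<omega>)"
    "AE \<omega> in M. (\<lambda>n. mean_n n (\<lambda>k. Ys k \<omega> * Ys k \<omega>)) \<longlonglongrightarrow> expectation (\<lambda>\<omega>. Y \<omega> * Y \<omega>)"
    using AE_mean_n_tendsto[of fst] AE_mean_n_tendsto[of snd]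
      AE_mean_n_tendsto[of "\<lambda>p. fst p * snd p"] AE_mean_n_tendsto[of "\<lambda>p. snd p * snd p"]
      int_X int_Y int_XY int_Y2 by (simp_all add: power2_eq_square)
  then show ?thesis
  proof eventually_elim
    case (elim \<omega>)
    have "(\<lambda>n. emp_cov n (\<lambda>k. Xs k \<omega>) (\<lambda>k. Ys k \<omega>) / emp_cov n (\<lambda>k. Ys k \<omega>) (\<lambda>k. Ys k \<omega>))
        \<longlonglongrightarrow> beta_cl M X Y"
      unfolding beta_cl using elim den by (intro tendsto_divide tendsto_emp_cov)
    moreover have "eventually (\<lambda>n. emp_cov n (\<lambda>k. Xs k \<omega>) (\<lambda>k. Ys k \<omega>) / emp_cov n (\<lambda>k. Ys k \<omega>) (\<lambda>k. Ys k \<omega>)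
        = beta_hat n (\<lambda>k. Xs k \<omega>) (\<lambda>k. Ys k \<omega>)) sequentially"
      using eventually_ge_at_top[of 1] by eventually_elim (simp add: beta_hat_eq_emp_cov)
    ultimately show ?case by (rule Lim_transform_eventually)
  qed
qed

lemma AE_beta_G_hat_tendsto:
  fixes w :: "real \<Rightarrow> real"
  assumes int_X: "integrable M X" and int_Y2: "integrable M (\<lambda>\<omega>. (Y \<omega>)\<^sup>2)"
    and w: "continuous_on {0..1} w" and cov_nz: "covar M Y (\<lambda>\<omega>. w (cdf_of M Y (Y \<omega>))) \<noteq> 0"
  shows "AE \<omega> in M. (\<lambda>n. beta_G_hat w n (\<lambda>k. Xs k \<omega>) (\<lambda>k. Ys k \<omega>)) \<longlonglongrightarrow> beta_G M w X Y"
proof -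
  interpret D: real_distribution "distr M borel Y" by simp
  define g where "g y = w (cdf_of M Y y)" for y
  have F_range: "cdf_of M Y y \<in> {0..1}" for y
    by (simp add: cdf_of_def D.cdf_nonneg D.cdf_bounded_prob)
  have [measurable]: "g \<in> borel_measurable borel"
    unfolding g_def[abs_def] cdf_of_def by (rule D.borel_measurable_bounded_comp_cdf(1)[OF w])
  obtain B where B: "\<And>y. \<bar>g y\<bar> \<le> B"
    using D.borel_measurable_bounded_comp_cdf(2)[OF w] by (auto simp: g_def cdf_of_def)
  have int_Y: "integrable M Y" using square_integrable_imp_integrable[OF Y int_Y2] .
  have int_g: "integrable M (\<lambda>\<omega>. g (Y \<omega>))"
    using B by (intro integrable_const_bound[where B=B]) auto
  have int_Xg: "integrable M (\<lambda>\<omega>. X \<omega> * g (Y \<omega>))" and int_Yg: "integrable M (\<lambda>\<omega>. Y \<omega> * g (Y \<omega>))"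
    using int_X int_Y B by (auto intro!: integrable_mult_bounded)
  have w_cdf: "(\<lambda>\<omega>. w (cdf_of M Y (Y \<omega>))) = (\<lambda>\<omega>. g (Y \<omega>))" by (simp add: g_def)
  have cov: "covar M U (\<lambda>\<omega>. w (cdf_of M Y (Y \<omega>)))
      = expectation (\<lambda>\<omega>. U \<omega> * g (Y \<omega>)) - expectation U * expectation (\<lambda>\<omega>. g (Y \<omega>))"
    if "integrable M U" "integrable M (\<lambda>\<omega>. U \<omega> * g (Y \<omega>))" for U
    unfolding w_cdf by (rule covar_eq_expectation[OF that(1) int_g that(2)])
  have "AE \<omega> in M. (\<lambda>n. mean_n n (\<lambda>k. Xs k \<omega>)) \<longlonglongrightarrow> expectation X"
    "AE \<omega> in M. (\<lambda>n. mean_n n (\<lambda>k. Ys k \<omega>)) \<longlonglongrightarrow> expectation Y"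
    "AE \<omega> in M. (\<lambda>n. mean_n n (\<lambda>k. \<bar>Xs k \<omega>\<bar>)) \<longlonglongrightarrow> expectation (\<lambda>\<omega>. \<bar>X \<omega>\<bar>)"
    "AE \<omega> in M. (\<lambda>n. mean_n n (\<lambda>k. \<bar>Ys k \<omega>\<bar>)) \<longlonglongrightarrow> expectation (\<lambda>\<omega>. \<bar>Y \<omega>\<bar>)"
    "AE \<omega> in M. (\<lambda>n. mean_n n (\<lambda>k. Xs k \<omega> * g (Ys k \<omega>))) \<longlonglongrightarrow> expectation (\<lambda>\<omega>. X \<omega> * g (Y \<omega>))"
    "AE \<omega> in M. (\<lambda>n. mean_n n (\<lambda>k. Ys k \<omega> * g (Ys k \<omega>))) \<longlonglongrightarrow> expectation (\<lambda>\<omega>. Y \<omega> * g (Y \<omega>))"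
    "AE \<omega> in M. (\<lambda>n. mean_n n (\<lambda>k. g (Ys k \<omega>))) \<longlonglongrightarrow> expectation (\<lambda>\<omega>. g (Y \<omega>))"
    using AE_mean_n_tendsto[of fst] AE_mean_n_tendsto[of snd]
      AE_mean_n_tendsto[of "\<lambda>p. \<bar>fst p\<bar>"] AE_mean_n_tendsto[of "\<lambda>p. \<bar>snd p\<bar>"]
      AE_mean_n_tendsto[of "\<lambda>p. fst p * g (snd p)"] AE_mean_n_tendsto[of "\<lambda>p. snd p * g (snd p)"]
      AE_mean_n_tendsto[of "\<lambda>p. g (snd p)"] int_X int_Y int_g int_Xg int_Yg by simp_all
  with AE_emp_cdf_uniform show ?thesis
  proof eventually_elim
    case (elim \<omega>)
    let ?x = "\<lambda>k. Xs k \<omega>" and ?y = "\<lambda>k. Ys k \<omega>"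
    define z where "z n k = w (emp_cdf n ?y (?y k))" for n k
    have "\<forall>\<epsilon>>0. eventually (\<lambda>n. \<forall>k. \<bar>z n k - g (?y k)\<bar> \<le> \<epsilon>) sequentially"
      using uniform_convergence_comp_continuous[OF w emp_cdf_bounds F_range elim(1)]
      unfolding z_def g_def by (auto elim!: eventually_mono)
    then have "(\<lambda>n. emp_cov n ?x (z n) / emp_cov n ?y (z n)) \<longlonglongrightarrow> beta_G M w X Y"
      unfolding beta_G_def cov[OF int_X int_Xg] cov[OF int_Y int_Yg]
      using elim cov_nz cov[OF int_Y int_Yg]
      by (intro tendsto_divide tendsto_emp_cov_uniform_perturb) auto
    moreover have "eventually (\<lambda>n. emp_cov n ?x (z n) / emp_cov n ?y (z n)
        = beta_G_hat w n ?x ?y) sequentially"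
      using eventually_ge_at_top[of 1] by eventually_elim (simp add: beta_G_hat_eq_emp_cov z_def[abs_def])
    ultimately show ?case by (rule Lim_transform_eventually)
  qed
qed

end

theorem theorem1:
  fixes M :: "'a measure"
    and X Y :: "'a \<Rightarrow> real"
    and Xs Ys :: "nat \<Rightarrow> 'a \<Rightarrow> real"
    and w :: "real \<Rightarrow> real"
  assumes "prob_space M"
    and "X \<in> borel_measurable M" and "Y \<in> borel_measurable M"
    and "prob_space.indep_vars M (\<lambda>_. borel) (\<lambda>i \<omega>. (Xs i \<omega>, Ys i \<omega>)) {1..}"
    and "\<And>i. i \<ge> 1 \<Longrightarrow>
           distr M borel (\<lambda>\<omega>. (Xs i \<omega>, Ys i \<omega>)) = distr M borel (\<lambda>\<omega>. (X \<omega>, Y \<omega>))"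
    and "integrable M X"
    and "integrable M (\<lambda>\<omega>. (Y \<omega>)\<^sup>2)"
    and "integrable M (\<lambda>\<omega>. X \<omega> * Y \<omega>)"
    and "continuous_on {0..1} w"
    and "var M Y > 0"
    and "integrable M (\<lambda>\<omega>. (Y \<omega> - (\<integral>x. Y x \<partial>M)) *
                       (w (cdf_of M Y (Y \<omega>)) - (\<integral>x. w (cdf_of M Y (Y x)) \<partial>M)))"
    and "covar M Y (\<lambda>\<omega>. w (cdf_of M Y (Y \<omega>))) \<noteq> 0"
  shows "AE \<omega> in M. (\<lambda>n. Delta_hat w n (\<lambda>k. Xs k \<omega>) (\<lambda>k. Ys k \<omega>)) \<longlonglongrightarrow> Delta M w X Y"
proof -
  interpret iid_pairs M X Y Xs Ys
    using assms(1-5) by (simp add: iid_pairs_def iid_pairs_axioms_def)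
  from AE_beta_G_hat_tendsto[OF assms(6,7,9,12)] AE_beta_hat_tendsto[OF assms(6,7,8,10)]
  show ?thesis
    by eventually_elim (simp add: Delta_hat_def Delta_def tendsto_diff)
qed

end
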